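(* Let $L$ be a multisorted algebra in the positive existential signature satisfying axioms (1), (2), (3), (7), (8), (9), (10). Let $M_1$ be a model of the almost morphic conditions of $L$. Then there is a model $M_2\supseteq M_1$ of the almost morphic conditions of $L$ which has witnesses over $M_1$.
   Context: The Boolean prime ideal theorem (equivalently, compactness) is assumed. Signature. There is a sort $n$ for each $n\ge0$. For every function $\alpha\colon\{1,\dots,n\}\to\{1,\dots,k\}$ there is a unary function symbol ("substitution") $\alpha\colon n\to k$ (argument of sort $n$, value of sort $k$). Each sort has $0,1,\vee,\wedge$; for each $n$ there is $\exists\colon n+1\to n$ (positive existential signature). For $\alpha\colon k\to n$, $\beta\colon n\to m$, $\beta\circ\alpha$ is the substitution symbol of the composite function. $\alpha^{\mathrm{tuple}}(x_1,\dots,x_k)=(x_{\alpha(1)},\dots,x_{\alpha(n)})$. The associated cylindrification of $\exists\colon n+1\to n$ is $c\colon n\to n+1$, $c(i)=i$; $\exists^{(n)}$ is $n$-fold projection. $x\le y$ means $x=x\wedge y$. Axioms: (1) each sort is a bounded distributive lattice; (2) substitutions preserve $0,1,\vee,\wedge$; (3) $(\beta\circ\alpha)(r)=\beta(\alpha(r))$; (7) $\exists(0)=0$, $\exists(r\vee s)=\exists(r)\vee\exists(s)$; (8) $r\le c(\exists(r))$; (9) $\exists(r\wedge c(s))=\exists(r)\wedge s$; (10) for substitutions $\alpha_i\colon k_i\to m$ ($i=1,\dots,n$) and $\beta_i\colon k_i+1\to m+n$ with $\beta_i(j)=\alpha_i(j)$ for $j\le k_i$, $\beta_i(k_i+1)=m+i$: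 $\exists^{(n)}(\bigwedge_i\beta_i(r_i))=\bigwedge_i\alpha_i(\exists(r_i))$ for all $r_i$ of sort $k_i+1$. Almost morphic conditions. Consider the first order relational language with an $n$-ary relation symbol (also written $r$) for each element $r$ of sort $n$ of $L$. The almost morphic conditions of $L$ are the sentences: $\forall\bar x\,\neg 0(\bar x)$; $\forall\bar x\, 1(\bar x)$; $\forall\bar x\,((r\vee s)(\bar x)\leftrightarrow r(\bar x)\lor s(\bar x))$; $\forall\bar x\,((r\wedge s)(\bar x)\leftrightarrow r(\bar x)\land s(\bar x))$; $\forall\bar x\,((\alpha(r))(\bar x)\leftrightarrow r(\alpha^{\mathrm{tuple}}(\bar x)))$ for every substitution $\alpha$ and $r$ of matching sort; and $\forall\bar x\,\forall y\,(r(\bar xy)\to(\exists(r))(\bar x))$ (all for elements of appropriate sorts). For a model $M$ and an $n$-tuple $\bar a$ from $M$, ${\mathfrak p}(\bar a)=\{r \text{ of sort } n: M\models r(\bar a)\}$, which is a prime filter on sort $n$. For a prime filter $G$ on sort $n+1$, $c^{-1}(G)=\{u \text{ of sort } n: c(u)\in G\}$. Witnesses: if $M_1\subseteq M_2$ (substructure) are models of the almost morphic conditions, $M_2$ has witnesses over $M_1$ if for every tuple $\bar a=(a_1,\dots,a_n)$ from $M_1$ and every prime filter $G$ on sort $n+1$ of $L$ with $c^{-1}(G)={\mathfrak p}(\bar a)$, there is $b\in M_2$ with $M_2\models r(\bar a b)$ for every $r\in G$. A prime filter is a proper, nonempty, upward-closed, $\wedge$-closed subset of a sort with $x\vee y\in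 F\Rightarrow x\in F$ or $y\in F$. *)

theory Defs
  imports "HOL-Library.FuncSet"
begin

text \<open>All sorts live in
  one HOL type 'e; sort n is the carrier S n.  A substitution symbol alpha : n -> k is a
  function alpha in {1..n} ->E {1..k} (extensional), and sub n k alpha is its operation
  from sort n to sort k.  ex n is the existential quantifier from sort n+1 to sort n.\<close>

record 'e pe_alg =
  S    :: "nat \<Rightarrow> 'e set"
  zero :: "nat \<Rightarrow> 'e"
  one  :: "nat \<Rightarrow> 'e"
  join :: "nat \<Rightarrow> 'e \<Rightarrow> 'e \<Rightarrow> 'e"
  meet :: "nat \<Rightarrow> 'e \<Rightarrow> 'e \<Rightarrow> 'e"
  sub  :: "nat \<Rightarrow> nat \<Rightarrow> (nat \<Rightarrow> nat) \<Rightarrow> 'e \<Rightarrow> 'e"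
  ex   :: "nat \<Rightarrow> 'e \<Rightarrow> 'e"

definition substs :: "nat \<Rightarrow> nat \<Rightarrow> (nat \<Rightarrow> nat) set" where
  "substs n k = {1..n} \<rightarrow>\<^sub>E {1..k}"

definition le :: "('e, 'z) pe_alg_scheme \<Rightarrow> nat \<Rightarrow> 'e \<Rightarrow> 'e \<Rightarrow> bool" where
  "le L n x y \<longleftrightarrow> x = meet L n x y"

definition cyl :: "nat \<Rightarrow> (nat \<Rightarrow> nat)" where
  "cyl n = restrict (\<lambda>i. i) {1..n}"

fun exs :: "('e, 'z) pe_alg_scheme \<Rightarrow> nat \<Rightarrow> nat \<Rightarrow> 'e \<Rightarrow> 'e" where
  "exs L m 0 x = x"
| "exs L m (Suc n) x = exs L m n (ex L (m + n) x)"

fun bigmeet :: "('e, 'z) pe_alg_scheme \<Rightarrow> nat \<Rightarrow> nat \<Rightarrow> (nat \<Rightarrow> 'e) \<Rightarrow> 'e" where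
  "bigmeet L k 0 f = one L k"
| "bigmeet L k (Suc n) f = meet L k (bigmeet L k n f) (f (Suc n))"

definition pe_algebra :: "('e, 'z) pe_alg_scheme \<Rightarrow> bool" where
  "pe_algebra L \<longleftrightarrow>
     (\<forall>n. zero L n \<in> S L n \<and> one L n \<in> S L n \<and>
        (\<forall>x\<in>S L n. \<forall>y\<in>S L n. join L n x y \<in> S L n \<and> meet L n x y \<in> S L n)) \<and>
     (\<forall>n k \<alpha> r. \<alpha> \<in> substs n k \<longrightarrow> r \<in> S L n \<longrightarrow> sub L n k \<alpha> r \<in> S L k) \<and>
     (\<forall>n r. r \<in> S L (Suc n) \<longrightarrow> ex L n r \<in> S L n)"

definition ax1 :: "('e, 'z) pe_alg_scheme \<Rightarrow> bool" where
  "ax1 L \<longleftrightarrow> (\<forall>n. \<forall>x\<in>S L n. \<forall>y\<in>S L n. \<forall>z\<in>S L n.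
      join L n (join L n x y) z = join L n x (join L n y z) \<and>
      meet L n (meet L n x y) z = meet L n x (meet L n y z) \<and>
      join L n x y = join L n y x \<and> meet L n x y = meet L n y x \<and>
      join L n x x = x \<and> meet L n x x = x \<and>
      join L n x (meet L n x y) = x \<and> meet L n x (join L n x y) = x \<and>
      meet L n x (join L n y z) = join L n (meet L n x y) (meet L n x z) \<and>
      join L n (zero L n) x = x \<and> meet L n (one L n) x = x)"

definition ax2 :: "('e, 'z) pe_alg_scheme \<Rightarrow> bool" where
  "ax2 L \<longleftrightarrow> (\<forall>n k \<alpha>. \<alpha> \<in> substs n k \<longrightarrow>
      sub L n k \<alpha> (zero L n) = zero L k \<and> sub L n k \<alpha> (one L n) = one L k \<and>
      (\<forall>r\<in>S L n. \<forall>s\<in>S L n.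
         sub L n k \<alpha> (join L n r s) = join L k (sub L n k \<alpha> r) (sub L n k \<alpha> s) \<and>
         sub L n k \<alpha> (meet L n r s) = meet L k (sub L n k \<alpha> r) (sub L n k \<alpha> s)))"

definition ax3 :: "('e, 'z) pe_alg_scheme \<Rightarrow> bool" where
  "ax3 L \<longleftrightarrow> (\<forall>k n m \<alpha> \<beta>. \<alpha> \<in> substs k n \<longrightarrow> \<beta> \<in> substs n m \<longrightarrow>
      (\<forall>r\<in>S L k. sub L k m (restrict (\<beta> \<circ> \<alpha>) {1..k}) r = sub L n m \<beta> (sub L k n \<alpha> r)))"

definition ax7 :: "('e, 'z) pe_alg_scheme \<Rightarrow> bool" where
  "ax7 L \<longleftrightarrow> (\<forall>n. ex L n (zero L (Suc n)) = zero L n \<and>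
      (\<forall>r\<in>S L (Suc n). \<forall>s\<in>S L (Suc n).
         ex L n (join L (Suc n) r s) = join L n (ex L n r) (ex L n s)))"

definition ax8 :: "('e, 'z) pe_alg_scheme \<Rightarrow> bool" where
  "ax8 L \<longleftrightarrow> (\<forall>n. \<forall>r\<in>S L (Suc n). le L (Suc n) r (sub L n (Suc n) (cyl n) (ex L n r)))"

definition ax9 :: "('e, 'z) pe_alg_scheme \<Rightarrow> bool" where
  "ax9 L \<longleftrightarrow> (\<forall>n. \<forall>r\<in>S L (Suc n). \<forall>s\<in>S L n.
      ex L n (meet L (Suc n) r (sub L n (Suc n) (cyl n) s)) = meet L n (ex L n r) s)"

text \<open>Axiom (10).  k i is the arity k_i, alpha i : k_i -> m, beta_i : k_i+1 -> m+n.\<close>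
definition ax10 :: "('e, 'z) pe_alg_scheme \<Rightarrow> bool" where
  "ax10 L \<longleftrightarrow> (\<forall>n m (k :: nat \<Rightarrow> nat) (\<alpha> :: nat \<Rightarrow> nat \<Rightarrow> nat) (r :: nat \<Rightarrow> 'e).
      (\<forall>i\<in>{1..n}. \<alpha> i \<in> substs (k i) m \<and> r i \<in> S L (Suc (k i))) \<longrightarrow>
      exs L m n (bigmeet L (m + n) n (\<lambda>i.
          sub L (Suc (k i)) (m + n)
              (restrict (\<lambda>j. if j \<le> k i then \<alpha> i j else m + i) {1..Suc (k i)}) (r i)))
      = bigmeet L m n (\<lambda>i. sub L (k i) m (\<alpha> i) (ex L (k i) (r i))))"

text \<open>alpha^tuple(x_1..x_k) = (x_alpha(1), ..., x_alpha(n)); tuples are lists (x_i = xs ! (i-1)).\<close>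
definition tup :: "nat \<Rightarrow> (nat \<Rightarrow> nat) \<Rightarrow> 'm list \<Rightarrow> 'm list" where
  "tup n \<alpha> xs = map (\<lambda>j. xs ! (\<alpha> j - 1)) [1..<Suc n]"

text \<open>A model: nonempty domain D and interpretation R, where r of sort n is interpreted
  as the n-ary relation {xs. length xs = n \<and> R r xs}.\<close>
definition almost_morphic ::
  "('e, 'z) pe_alg_scheme \<Rightarrow> 'm set \<Rightarrow> ('e \<Rightarrow> 'm list \<Rightarrow> bool) \<Rightarrow> bool" where
  "almost_morphic L D R \<longleftrightarrow> D \<noteq> {} \<and>
    (\<forall>n. \<forall>xs\<in>lists D. length xs = n \<longrightarrow>
        \<not> R (zero L n) xs \<and> R (one L n) xs \<and>
        (\<forall>r\<in>S L n. \<forall>s\<in>S L n.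
           (R (join L n r s) xs \<longleftrightarrow> R r xs \<or> R s xs) \<and>
           (R (meet L n r s) xs \<longleftrightarrow> R r xs \<and> R s xs))) \<and>
    (\<forall>n k \<alpha>. \<alpha> \<in> substs n k \<longrightarrow> (\<forall>r\<in>S L n. \<forall>xs\<in>lists D. length xs = k \<longrightarrow>
        (R (sub L n k \<alpha> r) xs \<longleftrightarrow> R r (tup n \<alpha> xs)))) \<and>
    (\<forall>n. \<forall>r\<in>S L (Suc n). \<forall>xs\<in>lists D. \<forall>y\<in>D. length xs = n \<longrightarrow>
        R r (xs @ [y]) \<longrightarrow> R (ex L n r) xs)"

definition prime_filter :: "('e, 'z) pe_alg_scheme \<Rightarrow> nat \<Rightarrow> 'e set \<Rightarrow> bool" where
  "prime_filter L n F \<longleftrightarrow> F \<subseteq> S L n \<and> F \<noteq> {} \<and> F \<noteq> S L n \<and>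
     (\<forall>x\<in>F. \<forall>y\<in>S L n. le L n x y \<longrightarrow> y \<in> F) \<and>
     (\<forall>x\<in>F. \<forall>y\<in>F. meet L n x y \<in> F) \<and>
     (\<forall>x\<in>S L n. \<forall>y\<in>S L n. join L n x y \<in> F \<longrightarrow> x \<in> F \<or> y \<in> F)"

definition ptype :: "('e, 'z) pe_alg_scheme \<Rightarrow> ('e \<Rightarrow> 'm list \<Rightarrow> bool) \<Rightarrow> 'm list \<Rightarrow> 'e set" where
  "ptype L R as = {r \<in> S L (length as). R r as}"

definition cyl_inv :: "('e, 'z) pe_alg_scheme \<Rightarrow> nat \<Rightarrow> 'e set \<Rightarrow> 'e set" where
  "cyl_inv L n G = {u \<in> S L n. sub L n (Suc n) (cyl n) u \<in> G}"

definition substructure ::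
  "('e, 'z) pe_alg_scheme \<Rightarrow> ('m \<Rightarrow> 'n) \<Rightarrow> 'm set \<Rightarrow> ('e \<Rightarrow> 'm list \<Rightarrow> bool)
     \<Rightarrow> 'n set \<Rightarrow> ('e \<Rightarrow> 'n list \<Rightarrow> bool) \<Rightarrow> bool" where
  "substructure L f D1 R1 D2 R2 \<longleftrightarrow> inj_on f D1 \<and> f ` D1 \<subseteq> D2 \<and>
     (\<forall>n. \<forall>r\<in>S L n. \<forall>as\<in>lists D1. length as = n \<longrightarrow> (R2 r (map f as) \<longleftrightarrow> R1 r as))"

definition has_witnesses ::
  "('e, 'z) pe_alg_scheme \<Rightarrow> ('m \<Rightarrow> 'n) \<Rightarrow> 'm set \<Rightarrow> ('e \<Rightarrow> 'm list \<Rightarrow> bool)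
     \<Rightarrow> 'n set \<Rightarrow> ('e \<Rightarrow> 'n list \<Rightarrow> bool) \<Rightarrow> bool" where
  "has_witnesses L f D1 R1 D2 R2 \<longleftrightarrow>
     (\<forall>as\<in>lists D1. \<forall>G. prime_filter L (Suc (length as)) G \<longrightarrow>
        cyl_inv L (length as) G = ptype L R1 as \<longrightarrow>
        (\<exists>b\<in>D2. \<forall>r\<in>G. R2 r (map f as @ [b])))"

end

theory Submission
  imports Defs
begin

text \<open>Fix a tuple of \<open>M\<^sub>1\<close> together with finitely many requests, each a prime filter \<open>G\<close> on
  sort \<open>n + 1\<close> over a subtuple whose cylindric part is the type of that subtuple. Axiom (10)
  projects all requested witnesses out at once, so the filter generated on the combined sort by
  the type of the tuple and the requests lies inside the preimage of that type; the prime filter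
  theorem extends it to a prime filter, i.e. a finite model on positions realising every request.
  An ultraproduct of these finite models over an ultrafilter on all such configurations, which
  again comes from the prime filter theorem, is the required extension: the elements of
  \<open>M\<^sub>1\<close> and the requests themselves are its elements, the latter serving as witnesses.\<close>

section \<open>Prime filters in distributive lattices\<close>

definition meet_filter :: "'a set \<Rightarrow> ('a \<Rightarrow> 'a \<Rightarrow> 'a) \<Rightarrow> 'a set \<Rightarrow> bool" where
  "meet_filter A mt F \<longleftrightarrow> F \<subseteq> A \<and> (\<forall>x\<in>F. \<forall>y\<in>A. mt x y = x \<longrightarrow> y \<in> F) \<and>
     (\<forall>x\<in>F. \<forall>y\<in>F. mt x y \<in> F)"

lemma meet_filterD:
  assumes "meet_filter A mt F"
  shows meet_filter_subset: "F \<subseteq> A"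
    and meet_filter_up: "x \<in> F \<Longrightarrow> y \<in> A \<Longrightarrow> mt x y = x \<Longrightarrow> y \<in> F"
    and meet_filter_meet: "x \<in> F \<Longrightarrow> y \<in> F \<Longrightarrow> mt x y \<in> F"
  using assms unfolding meet_filter_def by simp_all

lemma meet_filterI:
  assumes "F \<subseteq> A" "\<And>x y. x \<in> F \<Longrightarrow> y \<in> A \<Longrightarrow> mt x y = x \<Longrightarrow> y \<in> F"
    "\<And>x y. x \<in> F \<Longrightarrow> y \<in> F \<Longrightarrow> mt x y \<in> F"
  shows "meet_filter A mt F"
  using assms unfolding meet_filter_def by simp

locale meet_distrib_on =
  fixes A :: "'a set" and mt jn :: "'a \<Rightarrow> 'a \<Rightarrow> 'a"
  assumes meet_closed: "\<And>x y. x \<in> A \<Longrightarrow> y \<in> A \<Longrightarrow> mt x y \<in> A"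
    and meet_assoc: "\<And>x y z. x \<in> A \<Longrightarrow> y \<in> A \<Longrightarrow> z \<in> A \<Longrightarrow> mt (mt x y) z = mt x (mt y z)"
    and meet_comm: "\<And>x y. x \<in> A \<Longrightarrow> y \<in> A \<Longrightarrow> mt x y = mt y x"
    and meet_idem: "\<And>x. x \<in> A \<Longrightarrow> mt x x = x"
    and meet_join_distrib:
      "\<And>x y z. x \<in> A \<Longrightarrow> y \<in> A \<Longrightarrow> z \<in> A \<Longrightarrow> mt x (jn y z) = jn (mt x y) (mt x z)"
begin

abbreviation below :: "'a \<Rightarrow> 'a \<Rightarrow> bool" where
  "below x y \<equiv> mt x y = x"

lemma below_trans:
  assumes "x \<in> A" "y \<in> A" "z \<in> A" "below x y" "below y z"
  shows "below x z"
proof -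
  have "mt x z = mt (mt x y) z" using assms(4) by simp
  also have "\<dots> = mt x (mt y z)" using assms(1-3) by (rule meet_assoc)
  also have "\<dots> = x" using assms(4,5) by simp
  finally show ?thesis .
qed

lemma below_meet1:
  assumes "x \<in> A" "y \<in> A"
  shows "below (mt x y) x"
proof -
  have "mt (mt x y) x = mt x (mt x y)" using assms meet_comm meet_closed by simp
  also have "\<dots> = mt x y" using assms meet_assoc[of x x y] meet_idem by simp
  finally show ?thesis .
qed

lemma below_meet2: "x \<in> A \<Longrightarrow> y \<in> A \<Longrightarrow> below (mt x y) y"
  using meet_assoc[of x y y] meet_idem by simp

lemma below_meetI: "x \<in> A \<Longrightarrow> y \<in> A \<Longrightarrow> z \<in> A \<Longrightarrow> below x y \<Longrightarrow> below x z \<Longrightarrow> below x (mt y z)"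
  using meet_assoc[of x y z] by simp

lemma below_meet_mono:
  assumes "x \<in> A" "y \<in> A" "x' \<in> A" "y' \<in> A" "below x x'" "below y y'"
  shows "below (mt x y) (mt x' y')"
  by (meson assms below_meet1 below_meet2 below_meetI below_trans meet_closed)

lemma below_meet_left:
  assumes "x \<in> A" "x' \<in> A" "y \<in> A" "below x x'"
  shows "below (mt x y) (mt x' y)"
  using below_meet_mono[OF assms(1,3,2,3,4)] meet_idem[OF assms(3)] by blast

lemma meet_filter_adjoin:
  assumes Q: "meet_filter A mt Q" and a: "a \<in> A"
  defines "Qa \<equiv> {y \<in> A. \<exists>p\<in>Q. below (mt p a) y}"
  shows "meet_filter A mt Qa" and "Q \<subseteq> Qa" and "Q \<noteq> {} \<Longrightarrow> a \<in> Qa"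
proof -
  have QA: "Q \<subseteq> A" using meet_filter_subset[OF Q] .
  show "Q \<subseteq> Qa"
  proof
    fix p assume "p \<in> Q"
    then have "p \<in> A" "below (mt p a) p" using QA a below_meet1 by auto
    then show "p \<in> Qa" unfolding Qa_def using \<open>p \<in> Q\<close> by auto
  qed
  show "a \<in> Qa" if Qne: "Q \<noteq> {}"
  proof -
    obtain p where "p \<in> Q" using Qne by blast
    then have "below (mt p a) a" using QA a below_meet2 by auto
    then show ?thesis unfolding Qa_def using \<open>p \<in> Q\<close> a by auto
  qed
  show "meet_filter A mt Qa"
    unfolding meet_filter_def
  proof (intro conjI ballI impI)
    show "Qa \<subseteq> A" unfolding Qa_def by auto
  next
    fix x y assume "x \<in> Qa" "y \<in> A" "below x y"
    then obtain p where p: "p \<in> Q" "x \<in> A" "below (mt p a) x" unfolding Qa_def by auto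
    have "below (mt p a) y"
      using below_trans[OF _ p(2) \<open>y \<in> A\<close> p(3) \<open>below x y\<close>] p(1) QA a meet_closed by auto
    then show "y \<in> Qa" unfolding Qa_def using p(1) \<open>y \<in> A\<close> by auto
  next
    fix x y assume "x \<in> Qa" "y \<in> Qa"
    then obtain p p' where p: "p \<in> Q" "x \<in> A" "below (mt p a) x"
      and p': "p' \<in> Q" "y \<in> A" "below (mt p' a) y" unfolding Qa_def by auto
    have pA: "p \<in> A" "p' \<in> A" using p p' QA by auto
    define q where "q = mt p p'"
    have qQ: "q \<in> Q" unfolding q_def using meet_filter_meet[OF Q p(1) p'(1)] .
    have qA: "mt q a \<in> A" "q \<in> A" using pA a meet_closed unfolding q_def by auto
    have "below (mt q a) (mt p a)"
      using below_meet_left[OF qA(2) pA(1) a] below_meet1[OF pA] unfolding q_def by simp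
    then have x: "below (mt q a) x"
      using below_trans[OF qA(1) _ p(2) _ p(3)] pA a meet_closed by simp
    have "below (mt q a) (mt p' a)"
      using below_meet_left[OF qA(2) pA(2) a] below_meet2[OF pA] unfolding q_def by simp
    then have y: "below (mt q a) y"
      using below_trans[OF qA(1) _ p'(2) _ p'(3)] pA a meet_closed by simp
    have "below (mt q a) (mt x y)"
      using below_meetI[OF qA(1) p(2) p'(2) x y] .
    then show "mt x y \<in> Qa" unfolding Qa_def using qQ p(2) p'(2) meet_closed by auto
  qed
qed

lemma exists_maximal_filter_within:
  assumes F: "meet_filter A mt F" "\<forall>x\<in>F. \<phi> x"
  obtains Q where "F \<subseteq> Q" "meet_filter A mt Q" "\<forall>x\<in>Q. \<phi> x"
    "\<And>Q'. Q \<subseteq> Q' \<Longrightarrow> meet_filter A mt Q' \<Longrightarrow> \<forall>x\<in>Q'. \<phi> x \<Longrightarrow> Q' = Q"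
proof -
  define Fam where "Fam = {Q. F \<subseteq> Q \<and> meet_filter A mt Q \<and> (\<forall>x\<in>Q. \<phi> x)}"
  have "\<exists>M\<in>Fam. \<forall>X\<in>Fam. M \<subseteq> X \<longrightarrow> X = M"
  proof (rule subset_Zorn_nonempty)
    show "Fam \<noteq> {}" using F unfolding Fam_def by auto
    fix C assume C: "C \<noteq> {}" "subset.chain Fam C"
    then have CF: "F \<subseteq> X" "meet_filter A mt X" "\<forall>x\<in>X. \<phi> x" if "X \<in> C" for X
      using that unfolding Fam_def subset_chain_def by auto
    have two: "\<exists>Z\<in>C. x \<in> Z \<and> y \<in> Z" if "x \<in> \<Union>C" "y \<in> \<Union>C" for x y
      using that C unfolding subset_chain_def by blast
    have "meet_filter A mt (\<Union>C)"
    proof (rule meet_filterI)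
      show "\<Union>C \<subseteq> A" using CF(2) meet_filter_subset by blast
    next
      fix x y assume "x \<in> \<Union>C" "y \<in> A" "mt x y = x"
      then obtain X where "X \<in> C" "x \<in> X" by auto
      then show "y \<in> \<Union>C" using meet_filter_up[OF CF(2)] \<open>y \<in> A\<close> \<open>mt x y = x\<close> by auto
    next
      fix x y assume "x \<in> \<Union>C" "y \<in> \<Union>C"
      then obtain Z where "Z \<in> C" "x \<in> Z" "y \<in> Z" using two by auto
      then show "mt x y \<in> \<Union>C" using meet_filter_meet[OF CF(2)] by auto
    qed
    then show "\<Union>C \<in> Fam"
      using C(1) CF(1,3) unfolding Fam_def by blast
  qed
  then obtain M where M: "M \<in> Fam" and Mmax: "\<forall>X\<in>Fam. M \<subseteq> X \<longrightarrow> X = M"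
    by (erule bexE)
  show thesis
  proof (rule that[of M])
    fix Q' assume Q': "M \<subseteq> Q'" "meet_filter A mt Q'" "\<forall>x\<in>Q'. \<phi> x"
    moreover have "F \<subseteq> Q'" using M Q'(1) unfolding Fam_def by auto
    ultimately show "Q' = M" using Mmax unfolding Fam_def by simp
  qed (use M in \<open>simp_all add: Fam_def\<close>)
qed

lemma maximal_filter_escape:
  assumes up: "\<And>x y. x \<in> A \<Longrightarrow> y \<in> A \<Longrightarrow> below x y \<Longrightarrow> \<phi> x \<Longrightarrow> \<phi> y"
    and Q: "meet_filter A mt Q" "Q \<noteq> {}" "\<forall>x\<in>Q. \<phi> x"
    and max: "\<And>Q'. Q \<subseteq> Q' \<Longrightarrow> meet_filter A mt Q' \<Longrightarrow> \<forall>x\<in>Q'. \<phi> x \<Longrightarrow> Q' = Q"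
    and a: "a \<in> A" "a \<notin> Q"
  shows "\<exists>p\<in>Q. \<not> \<phi> (mt p a)"
proof (rule ccontr)
  assume "\<not> ?thesis"
  then have \<phi>a: "\<phi> (mt p a)" if "p \<in> Q" for p using that by blast
  let ?Qa = "{y \<in> A. \<exists>p\<in>Q. below (mt p a) y}"
  have "\<forall>y\<in>?Qa. \<phi> y"
  proof
    fix y assume "y \<in> ?Qa"
    then obtain p where p: "p \<in> Q" "y \<in> A" "below (mt p a) y" by blast
    have "mt p a \<in> A" using p(1) meet_filter_subset[OF Q(1)] a meet_closed by blast
    then show "\<phi> y" using up[OF _ p(2) p(3) \<phi>a[OF p(1)]] by blast
  qed
  then have "?Qa = Q"
    by (rule max[OF meet_filter_adjoin(2)[OF Q(1) a(1)] meet_filter_adjoin(1)[OF Q(1) a(1)]])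
  then show False using meet_filter_adjoin(3)[OF Q(1) a(1) Q(2)] a(2) by simp
qed

theorem prime_filter_within:
  assumes up: "\<And>x y. x \<in> A \<Longrightarrow> y \<in> A \<Longrightarrow> below x y \<Longrightarrow> \<phi> x \<Longrightarrow> \<phi> y"
    and prime: "\<And>x y. x \<in> A \<Longrightarrow> y \<in> A \<Longrightarrow> \<phi> (jn x y) \<Longrightarrow> \<phi> x \<or> \<phi> y"
    and F: "meet_filter A mt F" "F \<noteq> {}" "\<forall>x\<in>F. \<phi> x"
  shows "\<exists>Q. F \<subseteq> Q \<and> meet_filter A mt Q \<and> (\<forall>x\<in>Q. \<phi> x) \<and>
    (\<forall>x\<in>A. \<forall>y\<in>A. jn x y \<in> Q \<longrightarrow> x \<in> Q \<or> y \<in> Q)"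
proof -
  obtain Q where FQ: "F \<subseteq> Q" and Q: "meet_filter A mt Q" and Q\<phi>: "\<forall>x\<in>Q. \<phi> x"
    and max: "\<And>Q'. Q \<subseteq> Q' \<Longrightarrow> meet_filter A mt Q' \<Longrightarrow> \<forall>x\<in>Q'. \<phi> x \<Longrightarrow> Q' = Q"
    using exists_maximal_filter_within[OF F(1,3)] by blast
  have QA: "Q \<subseteq> A" using meet_filter_subset[OF Q] .
  have Qne: "Q \<noteq> {}" using FQ F(2) by blast
  have escape: "\<exists>p\<in>Q. \<not> \<phi> (mt p a)" if "a \<in> A" "a \<notin> Q" for a
    using maximal_filter_escape[OF up Q Qne Q\<phi> max that] .
  have "x \<in> Q \<or> y \<in> Q" if xy: "x \<in> A" "y \<in> A" "jn x y \<in> Q" for x y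
  proof (rule ccontr)
    assume "\<not> ?thesis"
    then obtain p p' where p: "p \<in> Q" "\<not> \<phi> (mt p x)" and p': "p' \<in> Q" "\<not> \<phi> (mt p' y)"
      using escape xy(1,2) by blast
    have pA: "p \<in> A" "p' \<in> A" using p(1) p'(1) QA by blast+
    let ?q = "mt p p'"
    have qA: "?q \<in> A" using meet_closed[OF pA] .
    have "mt ?q (jn x y) \<in> Q"
      using meet_filter_meet[OF Q meet_filter_meet[OF Q p(1) p'(1)] xy(3)] .
    then have "\<phi> (jn (mt ?q x) (mt ?q y))"
      using Q\<phi> meet_join_distrib[OF qA xy(1,2)] by simp
    then have "\<phi> (mt ?q x) \<or> \<phi> (mt ?q y)"
      using prime meet_closed[OF qA xy(1)] meet_closed[OF qA xy(2)] by blast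
    moreover have "below (mt ?q x) (mt p x)" "below (mt ?q y) (mt p' y)"
      using below_meet_left[OF qA pA(1) xy(1)] below_meet_left[OF qA pA(2) xy(2)]
        below_meet1[OF pA] below_meet2[OF pA] by simp_all
    ultimately show False
      using up[of "mt ?q x" "mt p x"] up[of "mt ?q y" "mt p' y"] p(2) p'(2)
        meet_closed[OF qA xy(1)] meet_closed[OF qA xy(2)] meet_closed[OF pA(1) xy(1)]
        meet_closed[OF pA(2) xy(2)]
      by blast
  qed
  then show ?thesis using FQ Q Q\<phi> by blast
qed

end

section \<open>Ultrafilters\<close>

definition ultrafilter_on :: "'i set \<Rightarrow> 'i set set \<Rightarrow> bool" where
  "ultrafilter_on I U \<longleftrightarrow> U \<subseteq> Pow I \<and> I \<in> U \<and> {} \<notin> U \<and>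
     (\<forall>X\<in>U. \<forall>Y. X \<subseteq> Y \<and> Y \<subseteq> I \<longrightarrow> Y \<in> U) \<and> (\<forall>X\<in>U. \<forall>Y\<in>U. X \<inter> Y \<in> U) \<and>
     (\<forall>X Y. X \<subseteq> I \<longrightarrow> Y \<subseteq> I \<longrightarrow> X \<union> Y \<in> U \<longrightarrow> X \<in> U \<or> Y \<in> U)"

context
  fixes I U assumes U: "ultrafilter_on I U"
begin

lemma ultrafilter_top: "I \<in> U"
  and ultrafilter_empty: "{} \<notin> U"
  and ultrafilter_mono: "X \<in> U \<Longrightarrow> X \<subseteq> Y \<Longrightarrow> Y \<subseteq> I \<Longrightarrow> Y \<in> U"
  and ultrafilter_Int: "X \<in> U \<Longrightarrow> Y \<in> U \<Longrightarrow> X \<inter> Y \<in> U"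
  and ultrafilter_Un: "X \<subseteq> I \<Longrightarrow> Y \<subseteq> I \<Longrightarrow> X \<union> Y \<in> U \<Longrightarrow> X \<in> U \<or> Y \<in> U"
  using U unfolding ultrafilter_on_def by blast+

lemma ultrafilter_Int_iff: "X \<subseteq> I \<Longrightarrow> Y \<subseteq> I \<Longrightarrow> X \<inter> Y \<in> U \<longleftrightarrow> X \<in> U \<and> Y \<in> U"
  using ultrafilter_Int ultrafilter_mono[of "X \<inter> Y"] by blast

lemma ultrafilter_Un_iff: "X \<subseteq> I \<Longrightarrow> Y \<subseteq> I \<Longrightarrow> X \<union> Y \<in> U \<longleftrightarrow> X \<in> U \<or> Y \<in> U"
  using ultrafilter_Un ultrafilter_mono[of _ "X \<union> Y"] by blast

end

lemma meet_distrib_on_Pow: "meet_distrib_on (Pow I) (\<inter>) (\<union>)"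
  by unfold_locales auto

definition fip_filter :: "'i set \<Rightarrow> 'k set \<Rightarrow> ('k \<Rightarrow> 'i \<Rightarrow> bool) \<Rightarrow> 'i set set" where
  "fip_filter I K P = {X \<in> Pow I. \<exists>K'. finite K' \<and> K' \<subseteq> K \<and> {i \<in> I. \<forall>k\<in>K'. P k i} \<subseteq> X}"

lemma fip_filterI:
  "finite K' \<Longrightarrow> K' \<subseteq> K \<Longrightarrow> {i \<in> I. \<forall>k\<in>K'. P k i} \<subseteq> X \<Longrightarrow> X \<subseteq> I \<Longrightarrow> X \<in> fip_filter I K P"
  unfolding fip_filter_def by blast

lemma fip_filterE:
  assumes "X \<in> fip_filter I K P"
  obtains K' where "finite K'" "K' \<subseteq> K" "{i \<in> I. \<forall>k\<in>K'. P k i} \<subseteq> X" "X \<subseteq> I"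
  using assms unfolding fip_filter_def by blast

lemma meet_filter_fip_filter: "meet_filter (Pow I) (\<inter>) (fip_filter I K P)"
proof (rule meet_filterI)
  show "fip_filter I K P \<subseteq> Pow I" unfolding fip_filter_def by auto
next
  fix X Y assume X: "X \<in> fip_filter I K P" and Y: "Y \<in> Pow I" and "X \<inter> Y = X"
  then have "X \<subseteq> Y" by auto
  with X Y show "Y \<in> fip_filter I K P"
    by (elim fip_filterE) (rule fip_filterI, auto)
next
  fix X Y assume X: "X \<in> fip_filter I K P" and Y: "Y \<in> fip_filter I K P"
  obtain K1 where K1: "finite K1" "K1 \<subseteq> K" "{i \<in> I. \<forall>k\<in>K1. P k i} \<subseteq> X" "X \<subseteq> I"
    using X by (rule fip_filterE)
  obtain K2 where K2: "finite K2" "K2 \<subseteq> K" "{i \<in> I. \<forall>k\<in>K2. P k i} \<subseteq> Y"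
    using Y by (rule fip_filterE)
  show "X \<inter> Y \<in> fip_filter I K P"
    by (rule fip_filterI[of "K1 \<union> K2"]) (use K1 K2 in auto)
qed

lemma fip_filter_nonempty:
  assumes fip: "\<And>K'. finite K' \<Longrightarrow> K' \<subseteq> K \<Longrightarrow> \<exists>i\<in>I. \<forall>k\<in>K'. P k i"
    and X: "X \<in> fip_filter I K P"
  shows "X \<noteq> {}"
proof -
  obtain K' where "finite K'" "K' \<subseteq> K" "{i \<in> I. \<forall>k\<in>K'. P k i} \<subseteq> X"
    using X by (rule fip_filterE)
  then show ?thesis using fip by blast
qed

lemma ultrafilter_onI:
  assumes U: "meet_filter (Pow I) (\<inter>) U" and "I \<in> U" "{} \<notin> U"
    and prime: "\<forall>X\<in>Pow I. \<forall>Y\<in>Pow I. X \<union> Y \<in> U \<longrightarrow> X \<in> U \<or> Y \<in> U"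
  shows "ultrafilter_on I U"
  unfolding ultrafilter_on_def
proof (intro conjI ballI allI impI)
  show "U \<subseteq> Pow I" using meet_filter_subset[OF U] .
next
  fix X Y assume "X \<in> U" "X \<subseteq> Y \<and> Y \<subseteq> I"
  then show "Y \<in> U" using meet_filter_up[OF U, of X Y] by (simp add: Int_absorb2)
next
  fix X Y assume "X \<in> U" "Y \<in> U"
  then show "X \<inter> Y \<in> U" using meet_filter_meet[OF U] by auto
qed (use assms in auto)

theorem ultrafilter_extending:
  fixes I :: "'i set" and K :: "'k set"
  assumes fip: "\<And>K'. finite K' \<Longrightarrow> K' \<subseteq> K \<Longrightarrow> \<exists>i\<in>I. \<forall>k\<in>K'. P k i"
  shows "\<exists>U. ultrafilter_on I U \<and> (\<forall>k\<in>K. {i\<in>I. P k i} \<in> U)"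
proof -
  let ?F = "fip_filter I K P"
  have basic: "{i\<in>I. P k i} \<in> ?F" if "k \<in> K" for k
    by (rule fip_filterI[of "{k}"]) (use that in auto)
  have I: "I \<in> ?F" by (rule fip_filterI[of "{}"]) auto
  have "\<exists>U. ?F \<subseteq> U \<and> meet_filter (Pow I) (\<inter>) U \<and> (\<forall>X\<in>U. X \<noteq> {}) \<and>
      (\<forall>X\<in>Pow I. \<forall>Y\<in>Pow I. X \<union> Y \<in> U \<longrightarrow> X \<in> U \<or> Y \<in> U)"
    by (rule meet_distrib_on.prime_filter_within[OF meet_distrib_on_Pow])
      (use meet_filter_fip_filter I fip_filter_nonempty[OF fip] in auto)
  then obtain U where FU: "?F \<subseteq> U" and U: "meet_filter (Pow I) (\<inter>) U"
    and nonempty: "\<forall>X\<in>U. X \<noteq> {}"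
    and prime: "\<forall>X\<in>Pow I. \<forall>Y\<in>Pow I. X \<union> Y \<in> U \<longrightarrow> X \<in> U \<or> Y \<in> U"
    by blast
  have "ultrafilter_on I U"
    by (rule ultrafilter_onI[OF U _ _ prime]) (use I FU nonempty in auto)
  then show ?thesis using basic FU by auto
qed

section \<open>Positive existential algebras\<close>

lemma cyl_substs: "n \<le> k \<Longrightarrow> cyl n \<in> substs n k"
  unfolding cyl_def substs_def by auto

lemma cyl_cyl: "m \<le> n \<Longrightarrow> restrict (cyl n \<circ> cyl m) {1..m} = cyl m"
  unfolding cyl_def by (auto simp: fun_eq_iff)

locale positive_existential_algebra =
  fixes L :: "('e, 'z) pe_alg_scheme"
  assumes closed: "pe_algebra L" and ax1: "ax1 L" and ax2: "ax2 L" and ax3: "ax3 L"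
    and ax7: "ax7 L" and ax8: "ax8 L" and ax9: "ax9 L" and ax10: "ax10 L"
begin

lemma zero_in_sort [simp]: "zero L n \<in> S L n"
  and one_in_sort [simp]: "one L n \<in> S L n"
  and meet_in_sort [simp]: "x \<in> S L n \<Longrightarrow> y \<in> S L n \<Longrightarrow> meet L n x y \<in> S L n"
  and join_in_sort [simp]: "x \<in> S L n \<Longrightarrow> y \<in> S L n \<Longrightarrow> join L n x y \<in> S L n"
  and sub_in_sort [simp]: "\<alpha> \<in> substs n k \<Longrightarrow> r \<in> S L n \<Longrightarrow> sub L n k \<alpha> r \<in> S L k"
  and ex_in_sort [simp]: "r \<in> S L (Suc n) \<Longrightarrow> ex L n r \<in> S L n"
  using closed unfolding pe_algebra_def by blast+

lemma meet_assoc: "x \<in> S L n \<Longrightarrow> y \<in> S L n \<Longrightarrow> z \<in> S L n \<Longrightarrow>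
    meet L n (meet L n x y) z = meet L n x (meet L n y z)"
  and meet_join_distrib: "x \<in> S L n \<Longrightarrow> y \<in> S L n \<Longrightarrow> z \<in> S L n \<Longrightarrow>
    meet L n x (join L n y z) = join L n (meet L n x y) (meet L n x z)"
  and meet_comm: "x \<in> S L n \<Longrightarrow> y \<in> S L n \<Longrightarrow> meet L n x y = meet L n y x"
  and join_comm: "x \<in> S L n \<Longrightarrow> y \<in> S L n \<Longrightarrow> join L n x y = join L n y x"
  and meet_join_absorb: "x \<in> S L n \<Longrightarrow> y \<in> S L n \<Longrightarrow> meet L n x (join L n x y) = x"
  and join_meet_absorb: "x \<in> S L n \<Longrightarrow> y \<in> S L n \<Longrightarrow> join L n x (meet L n x y) = x"
  and meet_idem: "x \<in> S L n \<Longrightarrow> meet L n x x = x"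
  and join_zero: "x \<in> S L n \<Longrightarrow> join L n (zero L n) x = x"
  and meet_one: "x \<in> S L n \<Longrightarrow> meet L n (one L n) x = x"
  using ax1 unfolding ax1_def by blast+

lemma meet_distrib_on_sort: "meet_distrib_on (S L n) (meet L n) (join L n)"
  by unfold_locales (auto simp: meet_assoc meet_idem meet_join_distrib intro: meet_comm)

lemma le_iff_meet: "le L n x y \<longleftrightarrow> meet L n x y = x"
  unfolding le_def by auto

lemma le_refl: "x \<in> S L n \<Longrightarrow> le L n x x"
  by (simp add: le_def meet_idem)

lemma le_trans: "x \<in> S L n \<Longrightarrow> y \<in> S L n \<Longrightarrow> z \<in> S L n \<Longrightarrow> le L n x y \<Longrightarrow> le L n y z \<Longrightarrow> le L n x z"
  unfolding le_iff_meet by (rule meet_distrib_on.below_trans[OF meet_distrib_on_sort])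

lemma le_meet1: "x \<in> S L n \<Longrightarrow> y \<in> S L n \<Longrightarrow> le L n (meet L n x y) x"
  unfolding le_iff_meet by (rule meet_distrib_on.below_meet1[OF meet_distrib_on_sort])

lemma le_meet2: "x \<in> S L n \<Longrightarrow> y \<in> S L n \<Longrightarrow> le L n (meet L n x y) y"
  unfolding le_iff_meet by (rule meet_distrib_on.below_meet2[OF meet_distrib_on_sort])

lemma le_meetI: "x \<in> S L n \<Longrightarrow> y \<in> S L n \<Longrightarrow> z \<in> S L n \<Longrightarrow> le L n x y \<Longrightarrow> le L n x z \<Longrightarrow>
    le L n x (meet L n y z)"
  unfolding le_iff_meet by (rule meet_distrib_on.below_meetI[OF meet_distrib_on_sort])

lemma le_meet_mono: "x \<in> S L n \<Longrightarrow> y \<in> S L n \<Longrightarrow> x' \<in> S L n \<Longrightarrow> y' \<in> S L n \<Longrightarrow>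
    le L n x x' \<Longrightarrow> le L n y y' \<Longrightarrow> le L n (meet L n x y) (meet L n x' y')"
  unfolding le_iff_meet by (rule meet_distrib_on.below_meet_mono[OF meet_distrib_on_sort])

lemma le_join1: "x \<in> S L n \<Longrightarrow> y \<in> S L n \<Longrightarrow> le L n x (join L n x y)"
  unfolding le_def by (simp add: meet_join_absorb)

lemma le_one: "x \<in> S L n \<Longrightarrow> le L n x (one L n)"
  unfolding le_iff_meet using meet_comm[of x n "one L n"] meet_one[of x n] by simp

lemma le_zero: "x \<in> S L n \<Longrightarrow> le L n (zero L n) x"
  unfolding le_iff_meet using meet_join_absorb[of "zero L n" n x] join_zero[of x n] by simp

lemma le_iff_join:
  assumes "x \<in> S L n" "y \<in> S L n"
  shows "le L n x y \<longleftrightarrow> join L n x y = y"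
proof
  assume "le L n x y"
  then have "join L n x y = join L n y (meet L n y x)"
    using assms join_comm meet_comm unfolding le_iff_meet by metis
  also have "\<dots> = y" using join_meet_absorb[OF assms(2,1)] .
  finally show "join L n x y = y" .
next
  assume "join L n x y = y"
  then show "le L n x y"
    using meet_join_absorb[OF assms] unfolding le_iff_meet by simp
qed

lemma sub_zero: "\<alpha> \<in> substs n k \<Longrightarrow> sub L n k \<alpha> (zero L n) = zero L k"
  and sub_one: "\<alpha> \<in> substs n k \<Longrightarrow> sub L n k \<alpha> (one L n) = one L k"
  and sub_join: "\<alpha> \<in> substs n k \<Longrightarrow> r \<in> S L n \<Longrightarrow> s \<in> S L n \<Longrightarrow>
    sub L n k \<alpha> (join L n r s) = join L k (sub L n k \<alpha> r) (sub L n k \<alpha> s)"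
  and sub_meet: "\<alpha> \<in> substs n k \<Longrightarrow> r \<in> S L n \<Longrightarrow> s \<in> S L n \<Longrightarrow>
    sub L n k \<alpha> (meet L n r s) = meet L k (sub L n k \<alpha> r) (sub L n k \<alpha> s)"
  using ax2 unfolding ax2_def by blast+

lemma sub_mono: "\<alpha> \<in> substs n k \<Longrightarrow> r \<in> S L n \<Longrightarrow> s \<in> S L n \<Longrightarrow> le L n r s \<Longrightarrow>
    le L k (sub L n k \<alpha> r) (sub L n k \<alpha> s)"
  unfolding le_iff_meet by (simp flip: sub_meet)

lemma sub_comp: "\<alpha> \<in> substs k n \<Longrightarrow> \<beta> \<in> substs n m \<Longrightarrow> r \<in> S L k \<Longrightarrow>
    sub L k m (restrict (\<beta> \<circ> \<alpha>) {1..k}) r = sub L n m \<beta> (sub L k n \<alpha> r)"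
  using ax3 unfolding ax3_def by blast

lemma ex_zero: "ex L n (zero L (Suc n)) = zero L n"
  and ex_join: "r \<in> S L (Suc n) \<Longrightarrow> s \<in> S L (Suc n) \<Longrightarrow>
    ex L n (join L (Suc n) r s) = join L n (ex L n r) (ex L n s)"
  using ax7 unfolding ax7_def by blast+

lemma le_cyl_ex: "r \<in> S L (Suc n) \<Longrightarrow> le L (Suc n) r (sub L n (Suc n) (cyl n) (ex L n r))"
  using ax8 unfolding ax8_def by blast

lemma ex_meet_cyl: "r \<in> S L (Suc n) \<Longrightarrow> s \<in> S L n \<Longrightarrow>
    ex L n (meet L (Suc n) r (sub L n (Suc n) (cyl n) s)) = meet L n (ex L n r) s"
  using ax9 unfolding ax9_def by blast

lemma exs_in_sort [simp]: "x \<in> S L (m + k) \<Longrightarrow> exs L m k x \<in> S L m"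
  by (induction k arbitrary: x) auto

lemma exs_zero: "exs L m k (zero L (m + k)) = zero L m"
  by (induction k) (auto simp: ex_zero)

lemma exs_join: "x \<in> S L (m + k) \<Longrightarrow> y \<in> S L (m + k) \<Longrightarrow>
    exs L m k (join L (m + k) x y) = join L m (exs L m k x) (exs L m k y)"
  by (induction k arbitrary: x y) (auto simp: ex_join)

lemma exs_mono: "x \<in> S L (m + k) \<Longrightarrow> y \<in> S L (m + k) \<Longrightarrow> le L (m + k) x y \<Longrightarrow>
    le L m (exs L m k x) (exs L m k y)"
  by (simp add: le_iff_join flip: exs_join)

lemma exs_meet_cyl:
  assumes "1 \<le> k" "y \<in> S L (m + k)" "s \<in> S L m"
  shows "exs L m k (meet L (m + k) y (sub L m (m + k) (cyl m) s)) = meet L m (exs L m k y) s"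
  using assms
proof (induction k arbitrary: y rule: nat_induct_at_least)
  case base
  then show ?case using ex_meet_cyl[of y m s] by simp
next
  case (Suc k)
  let ?c = "sub L m (m + k) (cyl m) s"
  have "sub L m (Suc (m + k)) (cyl m) s = sub L (m + k) (Suc (m + k)) (cyl (m + k)) ?c"
    using sub_comp[of "cyl m" m "m + k" "cyl (m + k)" "Suc (m + k)" s] cyl_substs cyl_cyl Suc.prems
    by simp
  then have "exs L m (Suc k) (meet L (m + Suc k) y (sub L m (m + Suc k) (cyl m) s))
      = exs L m k (meet L (m + k) (ex L (m + k) y) ?c)"
    using ex_meet_cyl Suc.prems cyl_substs by simp
  also have "\<dots> = meet L m (exs L m (Suc k) y) s"
    using Suc by simp
  finally show ?case .
qed

lemma bigmeet_in_sort [simp]: "(\<And>i. i \<in> {1..k} \<Longrightarrow> f i \<in> S L n) \<Longrightarrow> bigmeet L n k f \<in> S L n"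
  by (induction k) auto

lemma bigmeet_le:
  assumes "\<And>i. i \<in> {1..k} \<Longrightarrow> f i \<in> S L n" "i \<in> {1..k}"
  shows "le L n (bigmeet L n k f) (f i)"
  using assms
proof (induction k)
  case (Suc k)
  have bm: "bigmeet L n k f \<in> S L n"
    by (rule bigmeet_in_sort) (use Suc.prems in auto)
  show ?case
  proof (cases "i = Suc k")
    case True
    then show ?thesis using bm Suc.prems by (simp add: le_meet2)
  next
    case False
    then have "i \<in> {1..k}" using Suc.prems by auto
    then show ?thesis
      using Suc bm le_trans[OF _ bm _ le_meet1[OF bm]] by auto
  qed
qed simp

lemma bigmeet_mono:
  assumes "\<And>i. i \<in> {1..k} \<Longrightarrow> f i \<in> S L n" "\<And>i. i \<in> {1..k} \<Longrightarrow> g i \<in> S L n"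
    and "\<And>i. i \<in> {1..k} \<Longrightarrow> le L n (f i) (g i)"
  shows "le L n (bigmeet L n k f) (bigmeet L n k g)"
  using assms
proof (induction k)
  case (Suc k)
  have "bigmeet L n k f \<in> S L n" "bigmeet L n k g \<in> S L n"
    by (rule bigmeet_in_sort; use Suc.prems in auto)+
  then show ?case using Suc by (auto intro!: le_meet_mono)
qed (simp add: le_refl)

context
  fixes n F assumes F: "prime_filter L n F"
begin

lemma prime_filter_subset: "F \<subseteq> S L n"
  and prime_filter_up: "x \<in> F \<Longrightarrow> y \<in> S L n \<Longrightarrow> le L n x y \<Longrightarrow> y \<in> F"
  using F unfolding prime_filter_def by blast+

lemma prime_filter_zero: "zero L n \<notin> F"
proof
  assume "zero L n \<in> F"
  then have "S L n \<subseteq> F" using prime_filter_up le_zero by blast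
  then show False using F prime_filter_subset unfolding prime_filter_def by blast
qed

lemma prime_filter_one: "one L n \<in> F"
proof -
  obtain x where "x \<in> F" using F unfolding prime_filter_def by blast
  then show ?thesis using prime_filter_up[OF _ one_in_sort le_one] prime_filter_subset by blast
qed

lemma prime_filter_meet_iff: "x \<in> S L n \<Longrightarrow> y \<in> S L n \<Longrightarrow> meet L n x y \<in> F \<longleftrightarrow> x \<in> F \<and> y \<in> F"
  using F prime_filter_up[OF _ _ le_meet1] prime_filter_up[OF _ _ le_meet2]
  unfolding prime_filter_def by (meson meet_in_sort)

lemma prime_filter_join_iff: "x \<in> S L n \<Longrightarrow> y \<in> S L n \<Longrightarrow> join L n x y \<in> F \<longleftrightarrow> x \<in> F \<or> y \<in> F"
  using F prime_filter_up[OF _ _ le_join1] prime_filter_up[OF _ _ le_join1[of y n x]] join_comm[of x n y]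
  unfolding prime_filter_def by (metis join_in_sort)

lemma prime_filter_bigmeet: "(\<And>i. i \<in> {1..k} \<Longrightarrow> f i \<in> F) \<Longrightarrow> bigmeet L n k f \<in> F"
  using prime_filter_subset by (induction k) (auto simp: prime_filter_one prime_filter_meet_iff subset_iff)

end


lemma prime_filterI_meet_filter:
  assumes Q: "meet_filter (S L n) (meet L n) Q" and "Q \<noteq> {}" "zero L n \<notin> Q"
    and prime: "\<forall>x\<in>S L n. \<forall>y\<in>S L n. join L n x y \<in> Q \<longrightarrow> x \<in> Q \<or> y \<in> Q"
  shows "prime_filter L n Q"
  unfolding prime_filter_def
proof (intro conjI ballI impI)
  show "Q \<subseteq> S L n" using meet_filter_subset[OF Q] .
  show "Q \<noteq> {}" "Q \<noteq> S L n" using assms(2,3) zero_in_sort by auto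
next
  fix x y assume "x \<in> Q" "y \<in> S L n" "le L n x y"
  then show "y \<in> Q" using meet_filter_up[OF Q] unfolding le_iff_meet by blast
next
  fix x y assume "x \<in> Q" "y \<in> Q"
  then show "meet L n x y \<in> Q" by (rule meet_filter_meet[OF Q])
qed (use prime in blast)

lemma exists_prime_filter_over:
  assumes p: "prime_filter L m p"
    and F: "meet_filter (S L (m + k)) (meet L (m + k)) F" "F \<noteq> {}" "\<forall>y\<in>F. exs L m k y \<in> p"
  obtains Q where "prime_filter L (m + k) Q" "F \<subseteq> Q" "\<forall>y\<in>Q. exs L m k y \<in> p"
proof -
  have up: "exs L m k y \<in> p"
    if "x \<in> S L (m + k)" "y \<in> S L (m + k)" "meet L (m + k) x y = x" "exs L m k x \<in> p" for x y
    using prime_filter_up[OF p that(4) exs_in_sort[OF that(2)] exs_mono[OF that(1,2)]] that(3)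
    unfolding le_iff_meet by blast
  have prime: "exs L m k x \<in> p \<or> exs L m k y \<in> p"
    if "x \<in> S L (m + k)" "y \<in> S L (m + k)" "exs L m k (join L (m + k) x y) \<in> p" for x y
    using that(3) exs_join[OF that(1,2)] prime_filter_join_iff[OF p exs_in_sort[OF that(1)] exs_in_sort[OF that(2)]]
    by simp
  have "\<exists>Q. F \<subseteq> Q \<and> meet_filter (S L (m + k)) (meet L (m + k)) Q \<and> (\<forall>y\<in>Q. exs L m k y \<in> p) \<and>
      (\<forall>x\<in>S L (m + k). \<forall>y\<in>S L (m + k). join L (m + k) x y \<in> Q \<longrightarrow> x \<in> Q \<or> y \<in> Q)"
    by (rule meet_distrib_on.prime_filter_within[OF meet_distrib_on_sort])
      (use up prime F in auto)
  then obtain Q where FQ: "F \<subseteq> Q" and Q: "meet_filter (S L (m + k)) (meet L (m + k)) Q"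
    and Qp: "\<forall>y\<in>Q. exs L m k y \<in> p"
    and Qprime: "\<forall>x\<in>S L (m + k). \<forall>y\<in>S L (m + k). join L (m + k) x y \<in> Q \<longrightarrow> x \<in> Q \<or> y \<in> Q"
    by (elim exE conjE)
  have "zero L (m + k) \<notin> Q" using Qp exs_zero[of m k] prime_filter_zero[OF p] by auto
  moreover have "Q \<noteq> {}" using FQ F(2) by blast
  ultimately have "prime_filter L (m + k) Q"
    by (rule prime_filterI_meet_filter[OF Q _ _ Qprime, rotated])
  then show thesis using that FQ Qp by blast
qed

end

section \<open>Substitutions given by lists of positions\<close>

definition subst_of :: "nat list \<Rightarrow> nat \<Rightarrow> nat" where
  "subst_of ys = restrict (\<lambda>j. ys ! (j - 1)) {1..length ys}"

definition first_index :: "'a list \<Rightarrow> 'a \<Rightarrow> nat" where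
  "first_index xs a = (LEAST j. j < length xs \<and> xs ! j = a)"

text \<open>One-based position of the first occurrence; absent elements get the junk position 1.\<close>

definition position :: "'a list \<Rightarrow> 'a \<Rightarrow> nat" where
  "position xs a = (if a \<in> set xs then Suc (first_index xs a) else 1)"

lemma substs_apply: "\<alpha> \<in> substs n k \<Longrightarrow> j \<in> {1..n} \<Longrightarrow> \<alpha> j \<in> {1..k}"
  unfolding substs_def by (rule PiE_mem)

lemma subst_of_substs: "set ys \<subseteq> {1..N} \<Longrightarrow> subst_of ys \<in> substs (length ys) N"
  unfolding subst_of_def substs_def by (auto simp: subset_iff)

lemma subst_of_snoc:
  "subst_of (xs @ [y]) = restrict (\<lambda>j. if j \<le> length xs then subst_of xs j else y) {1..Suc (length xs)}"
  unfolding subst_of_def by (auto simp: nth_append fun_eq_iff)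

lemma cyl_comp_subst_of:
  assumes "set xs \<subseteq> {1..m}"
  shows "restrict (cyl m \<circ> subst_of xs) {1..length xs} = subst_of xs"
proof -
  have "xs ! (j - 1) \<in> {1..m}" if "j \<in> {1..length xs}" for j
  proof -
    have "xs ! (j - 1) \<in> set xs" using that by auto
    then show ?thesis using assms by blast
  qed
  then show ?thesis unfolding subst_of_def cyl_def by (auto simp: fun_eq_iff)
qed

lemma first_index: "a \<in> set xs \<Longrightarrow> first_index xs a < length xs \<and> xs ! first_index xs a = a"
  unfolding first_index_def by (rule LeastI_ex) (simp add: in_set_conv_nth)

lemma position_range: "xs \<noteq> [] \<Longrightarrow> position xs a \<in> {1..length xs}"
  unfolding position_def using first_index[of a xs] by (auto simp: Suc_le_eq)

lemma positions_range: "xs \<noteq> [] \<Longrightarrow> set (map (position xs) bs) \<subseteq> {1..length xs}"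
  using position_range[of xs] by auto

lemma subst_of_positions: "xs \<noteq> [] \<Longrightarrow> subst_of (map (position xs) bs) \<in> substs (length bs) (length xs)"
  using subst_of_substs[OF positions_range] by simp

lemma length_tup [simp]: "length (tup n \<alpha> xs) = n"
  by (simp add: tup_def del: upt_Suc)

lemma nth_tup: "j < n \<Longrightarrow> tup n \<alpha> xs ! j = xs ! (\<alpha> (Suc j) - 1)"
  by (simp add: tup_def del: upt_Suc)

lemma tup_subst_of_positions:
  assumes "set bs \<subseteq> set xs"
  shows "tup (length bs) (subst_of (map (position xs) bs)) xs = bs"
proof (rule nth_equalityI)
  fix j assume "j < length (tup (length bs) (subst_of (map (position xs) bs)) xs)"
  then have j: "j < length bs" by simp
  then have "bs ! j \<in> set xs" using assms by auto
  then show "tup (length bs) (subst_of (map (position xs) bs)) xs ! j = bs ! j"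
    using j first_index[of "bs ! j" xs] by (simp add: nth_tup subst_of_def position_def)
qed simp

lemma subst_of_tup:
  assumes "\<alpha> \<in> substs n (length ys)"
  shows "subst_of (tup n \<alpha> ys) = restrict (subst_of ys \<circ> \<alpha>) {1..n}"
proof
  fix j show "subst_of (tup n \<alpha> ys) j = restrict (subst_of ys \<circ> \<alpha>) {1..n} j"
  proof (cases "j \<in> {1..n}")
    case True
    then have "j - 1 < n" "Suc (j - 1) = j" by auto
    then have "tup n \<alpha> ys ! (j - 1) = ys ! (\<alpha> j - 1)"
      using nth_tup[of "j - 1" n \<alpha> ys] by simp
    then show ?thesis using True substs_apply[OF assms True] unfolding subst_of_def by simp
  qed (auto simp: subst_of_def)
qed

lemma map_tup:
  assumes "\<alpha> \<in> substs n (length xs)"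
  shows "map f (tup n \<alpha> xs) = tup n \<alpha> (map f xs)"
proof -
  have "\<alpha> j - 1 < length xs" if "j \<in> set [1..<Suc n]" for j
    using substs_apply[OF assms, of j] that by auto
  then show ?thesis unfolding tup_def by simp
qed

section \<open>Prime filters as finite models\<close>

definition filter_rel :: "('e, 'z) pe_alg_scheme \<Rightarrow> nat \<Rightarrow> 'e set \<Rightarrow> 'e \<Rightarrow> nat list \<Rightarrow> bool" where
  "filter_rel L N Q r ys \<longleftrightarrow> sub L (length ys) N (subst_of ys) r \<in> Q"

context positive_existential_algebra
begin

lemma ex_sub_extend:
  assumes \<alpha>: "\<alpha> \<in> substs k m" and r: "r \<in> S L (Suc k)"
  shows "ex L m (sub L (Suc k) (Suc m) (restrict (\<lambda>j. if j \<le> k then \<alpha> j else Suc m) {1..Suc k}) r)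
    = sub L k m \<alpha> (ex L k r)"
proof -
  let ?\<beta> = "restrict (\<lambda>j. if j \<le> k then \<alpha> j else Suc m) {1..Suc k}"
  have "?\<beta> \<in> substs (Suc k) (Suc m)"
    using substs_apply[OF \<alpha>] unfolding substs_def by fastforce
  then have "sub L (Suc k) (Suc m) ?\<beta> r \<in> S L (Suc m)" using r by simp
  moreover have "ex L m (meet L (Suc m) (one L (Suc m)) (sub L (Suc k) (Suc m) ?\<beta> r))
      = meet L m (one L m) (sub L k m \<alpha> (ex L k r))"
    using ax10[unfolded ax10_def, rule_format, of 1 "\<lambda>_. \<alpha>" "\<lambda>_. k" m "\<lambda>_. r"] \<alpha> r
    by (simp cong: if_cong)
  ultimately show ?thesis using \<alpha> r meet_one by simp
qed

text \<open>The witness y is first replaced by a fresh variable N+1, which axiom (8) lets us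
  quantify; substituting y back keeps the result, because the identity substitution
  fixes everything in the image of a substitution (axiom (3)).\<close>

lemma filter_rel_ex:
  assumes Q: "prime_filter L N Q" and xs: "set (xs @ [y]) \<subseteq> {1..N}"
    and r: "r \<in> S L (Suc (length xs))" and h: "filter_rel L N Q r (xs @ [y])"
  shows "filter_rel L N Q (ex L (length xs) r) xs"
proof -
  let ?n = "length xs"
  define \<beta> where "\<beta> = restrict (\<lambda>j. if j \<le> ?n then subst_of xs j else Suc N) {1..Suc ?n}"
  define \<gamma> where "\<gamma> = restrict (\<lambda>j. if j \<le> N then j else y) {1..Suc N}"
  define t where "t = sub L (Suc ?n) (Suc N) \<beta> r"
  have px: "subst_of xs \<in> substs ?n N" using xs by (intro subst_of_substs) auto
  have y: "y \<in> {1..N}" using xs by auto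
  have \<beta>: "\<beta> \<in> substs (Suc ?n) (Suc N)"
    using substs_apply[OF px] unfolding \<beta>_def substs_def by fastforce
  have \<gamma>: "\<gamma> \<in> substs (Suc N) N" using y unfolding \<gamma>_def substs_def by auto
  have cN: "cyl N \<in> substs N (Suc N)" "cyl N \<in> substs N N" by (auto intro: cyl_substs)
  have tS: "t \<in> S L (Suc N)" using \<beta> r t_def by simp
  have "restrict (\<gamma> \<circ> \<beta>) {1..Suc ?n} = subst_of (xs @ [y])"
  proof
    fix j
    show "restrict (\<gamma> \<circ> \<beta>) {1..Suc ?n} j = subst_of (xs @ [y]) j"
    proof (cases "j \<in> {1..?n}")
      case True
      then show ?thesis using substs_apply[OF px True] unfolding \<beta>_def \<gamma>_def subst_of_snoc by auto
    next
      case False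
      then show ?thesis using y unfolding \<beta>_def \<gamma>_def subst_of_snoc by auto
    qed
  qed
  then have 1: "sub L (Suc ?n) N (subst_of (xs @ [y])) r = sub L (Suc N) N \<gamma> t"
    using sub_comp[OF \<beta> \<gamma> r] t_def by simp
  have et: "ex L N t = sub L ?n N (subst_of xs) (ex L ?n r)"
    using ex_sub_extend[OF px r] unfolding t_def \<beta>_def by simp
  have "le L N (sub L (Suc N) N \<gamma> t) (sub L (Suc N) N \<gamma> (sub L N (Suc N) (cyl N) (ex L N t)))"
    using sub_mono[OF \<gamma> tS _ le_cyl_ex[OF tS]] cN tS by simp
  also have "restrict (\<gamma> \<circ> cyl N) {1..N} = cyl N"
    unfolding \<gamma>_def cyl_def by (auto simp: fun_eq_iff)
  then have "sub L (Suc N) N \<gamma> (sub L N (Suc N) (cyl N) (ex L N t)) = sub L N N (cyl N) (ex L N t)"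
    using sub_comp[OF cN(1) \<gamma>, of "ex L N t"] tS by simp
  also have "sub L N N (cyl N) (ex L N t) = ex L N t"
    using sub_comp[OF px cN(2), of "ex L ?n r"] cyl_comp_subst_of[of xs N] xs r et by simp
  finally have "le L N (sub L (Suc ?n) N (subst_of (xs @ [y])) r) (ex L N t)"
    using 1 by simp
  moreover have "sub L (Suc ?n) N (subst_of (xs @ [y])) r \<in> Q"
    using h unfolding filter_rel_def by simp
  ultimately show ?thesis
    using prime_filter_up[OF Q] et px r unfolding filter_rel_def by simp
qed

lemma almost_morphic_filter_rel:
  assumes Q: "prime_filter L N Q" and N: "0 < N"
  shows "almost_morphic L {1..N} (filter_rel L N Q)"
  unfolding almost_morphic_def
proof (intro conjI allI ballI impI)
  show "{1..N} \<noteq> {}" using N by simp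
next
  fix n and ys :: "nat list" assume ys: "ys \<in> lists {1..N}" "length ys = n"
  then have s: "subst_of ys \<in> substs n N" using subst_of_substs by fastforce
  show "\<not> filter_rel L N Q (zero L n) ys" "filter_rel L N Q (one L n) ys"
    using ys s prime_filter_zero[OF Q] prime_filter_one[OF Q]
    by (simp_all add: filter_rel_def sub_zero sub_one)
  fix r s' assume "r \<in> S L n" "s' \<in> S L n"
  then show "filter_rel L N Q (join L n r s') ys \<longleftrightarrow> filter_rel L N Q r ys \<or> filter_rel L N Q s' ys"
    and "filter_rel L N Q (meet L n r s') ys \<longleftrightarrow> filter_rel L N Q r ys \<and> filter_rel L N Q s' ys"
    using ys s prime_filter_join_iff[OF Q] prime_filter_meet_iff[OF Q]
    by (simp_all add: filter_rel_def sub_join sub_meet)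
next
  fix n k \<alpha> r and ys :: "nat list"
  assume \<alpha>: "\<alpha> \<in> substs n k" and r: "r \<in> S L n" and ys: "ys \<in> lists {1..N}" "length ys = k"
  then have s: "subst_of ys \<in> substs k N" using subst_of_substs by fastforce
  show "filter_rel L N Q (sub L n k \<alpha> r) ys \<longleftrightarrow> filter_rel L N Q r (tup n \<alpha> ys)"
    using sub_comp[OF \<alpha> s r] subst_of_tup[of \<alpha> n ys] \<alpha> ys by (simp add: filter_rel_def)
next
  fix n r and ys :: "nat list" and y
  assume "r \<in> S L (Suc n)" "ys \<in> lists {1..N}" "y \<in> {1..N}" "length ys = n"
    "filter_rel L N Q r (ys @ [y])"
  then show "filter_rel L N Q (ex L n r) ys"
    using filter_rel_ex[OF Q, of ys y r] by auto
qed

end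

lemma almost_morphicD:
  assumes "almost_morphic L D R"
  shows almost_morphic_nonempty: "D \<noteq> {}"
    and almost_morphic_zero: "xs \<in> lists D \<Longrightarrow> \<not> R (zero L (length xs)) xs"
    and almost_morphic_one: "xs \<in> lists D \<Longrightarrow> R (one L (length xs)) xs"
    and almost_morphic_join: "xs \<in> lists D \<Longrightarrow> r \<in> S L (length xs) \<Longrightarrow> s \<in> S L (length xs) \<Longrightarrow>
      R (join L (length xs) r s) xs \<longleftrightarrow> R r xs \<or> R s xs"
    and almost_morphic_meet: "xs \<in> lists D \<Longrightarrow> r \<in> S L (length xs) \<Longrightarrow> s \<in> S L (length xs) \<Longrightarrow>
      R (meet L (length xs) r s) xs \<longleftrightarrow> R r xs \<and> R s xs"
    and almost_morphic_sub: "\<alpha> \<in> substs n k \<Longrightarrow> r \<in> S L n \<Longrightarrow> xs \<in> lists D \<Longrightarrow> length xs = k \<Longrightarrow>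
      R (sub L n k \<alpha> r) xs \<longleftrightarrow> R r (tup n \<alpha> xs)"
    and almost_morphic_ex: "r \<in> S L (Suc n) \<Longrightarrow> xs \<in> lists D \<Longrightarrow> y \<in> D \<Longrightarrow> length xs = n \<Longrightarrow>
      R r (xs @ [y]) \<Longrightarrow> R (ex L n r) xs"
proof -
  note parts = assms[unfolded almost_morphic_def]
  note lattice = parts[THEN conjunct2, THEN conjunct1, rule_format, OF _ refl]
  show "D \<noteq> {}" using parts by (rule conjunct1)
  show "xs \<in> lists D \<Longrightarrow> \<not> R (zero L (length xs)) xs"
    and "xs \<in> lists D \<Longrightarrow> R (one L (length xs)) xs"
    using lattice by simp_all
  show "xs \<in> lists D \<Longrightarrow> r \<in> S L (length xs) \<Longrightarrow> s \<in> S L (length xs) \<Longrightarrow>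
      R (join L (length xs) r s) xs \<longleftrightarrow> R r xs \<or> R s xs"
    and "xs \<in> lists D \<Longrightarrow> r \<in> S L (length xs) \<Longrightarrow> s \<in> S L (length xs) \<Longrightarrow>
      R (meet L (length xs) r s) xs \<longleftrightarrow> R r xs \<and> R s xs"
    using lattice by simp_all
  show "\<alpha> \<in> substs n k \<Longrightarrow> r \<in> S L n \<Longrightarrow> xs \<in> lists D \<Longrightarrow> length xs = k \<Longrightarrow>
      R (sub L n k \<alpha> r) xs \<longleftrightarrow> R r (tup n \<alpha> xs)"
    using parts[THEN conjunct2, THEN conjunct2, THEN conjunct1, rule_format] by simp
  show "r \<in> S L (Suc n) \<Longrightarrow> xs \<in> lists D \<Longrightarrow> y \<in> D \<Longrightarrow> length xs = n \<Longrightarrow>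
      R r (xs @ [y]) \<Longrightarrow> R (ex L n r) xs"
    using parts[THEN conjunct2, THEN conjunct2, THEN conjunct2, rule_format] by simp
qed

lemma almost_morphic_ultraproduct:
  fixes R :: "'i \<Rightarrow> 'e \<Rightarrow> 'd list \<Rightarrow> bool" and h :: "'i \<Rightarrow> 'x \<Rightarrow> 'd"
  assumes U: "ultrafilter_on I U" and M: "\<And>i. i \<in> I \<Longrightarrow> almost_morphic L (D i) (R i)"
    and h: "\<And>i x. i \<in> I \<Longrightarrow> h i x \<in> D i"
  shows "almost_morphic L UNIV (\<lambda>r xs. {i \<in> I. R i r (map (h i) xs)} \<in> U)"
proof -
  have hs: "map (h i) xs \<in> lists (D i)" if "i \<in> I" for i xs
    using h that by auto
  let ?Z = "\<lambda>r xs. {i \<in> I. R i r (map (h i) xs)}"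
  show ?thesis
    unfolding almost_morphic_def
  proof (intro conjI allI ballI impI)
    show "(UNIV :: 'x set) \<noteq> {}" by simp
  next
    fix n and xs :: "'x list" assume n: "length xs = n"
    have lattice: "\<not> R i (zero L n) (map (h i) xs) \<and> R i (one L n) (map (h i) xs) \<and>
        (\<forall>r\<in>S L n. \<forall>s\<in>S L n.
          (R i (join L n r s) (map (h i) xs) \<longleftrightarrow> R i r (map (h i) xs) \<or> R i s (map (h i) xs)) \<and>
          (R i (meet L n r s) (map (h i) xs) \<longleftrightarrow> R i r (map (h i) xs) \<and> R i s (map (h i) xs)))"
      if "i \<in> I" for i
      using almost_morphic_zero[OF M[OF that] hs[OF that, of xs]]
        almost_morphic_one[OF M[OF that] hs[OF that, of xs]]
        almost_morphic_join[OF M[OF that] hs[OF that, of xs]]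
        almost_morphic_meet[OF M[OF that] hs[OF that, of xs]] n by simp
    have Z0: "?Z (zero L n) xs = {}" and Z1: "?Z (one L n) xs = I"
      using lattice by auto
    show "?Z (zero L n) xs \<notin> U" unfolding Z0 by (rule ultrafilter_empty[OF U])
    show "?Z (one L n) xs \<in> U" unfolding Z1 by (rule ultrafilter_top[OF U])
    fix r s assume "r \<in> S L n" "s \<in> S L n"
    then have "?Z (join L n r s) xs = ?Z r xs \<union> ?Z s xs" "?Z (meet L n r s) xs = ?Z r xs \<inter> ?Z s xs"
      using lattice by auto
    then show "?Z (join L n r s) xs \<in> U \<longleftrightarrow> ?Z r xs \<in> U \<or> ?Z s xs \<in> U"
      and "?Z (meet L n r s) xs \<in> U \<longleftrightarrow> ?Z r xs \<in> U \<and> ?Z s xs \<in> U"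
      using ultrafilter_Un_iff[OF U] ultrafilter_Int_iff[OF U] by auto
  next
    fix n k \<alpha> r and xs :: "'x list"
    assume \<alpha>: "\<alpha> \<in> substs n k" and r: "r \<in> S L n" and xs: "length xs = k"
    have "R i (sub L n k \<alpha> r) (map (h i) xs) \<longleftrightarrow> R i r (map (h i) (tup n \<alpha> xs))" if "i \<in> I" for i
      using almost_morphic_sub[OF M[OF that] \<alpha> r hs[OF that]] \<alpha> xs map_tup[of \<alpha> n xs "h i"]
      by simp
    then have "{i \<in> I. R i (sub L n k \<alpha> r) (map (h i) xs)} = {i \<in> I. R i r (map (h i) (tup n \<alpha> xs))}"
      by auto
    then show "{i \<in> I. R i (sub L n k \<alpha> r) (map (h i) xs)} \<in> U \<longleftrightarrow>
        {i \<in> I. R i r (map (h i) (tup n \<alpha> xs))} \<in> U"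
      by simp
  next
    fix n r and xs :: "'x list" and y
    assume r: "r \<in> S L (Suc n)" and xs: "length xs = n"
      and y: "{i \<in> I. R i r (map (h i) (xs @ [y]))} \<in> U"
    have "R i (ex L n r) (map (h i) xs)" if "i \<in> I" "R i r (map (h i) (xs @ [y]))" for i
      using almost_morphic_ex[OF M[OF that(1)] r hs[OF that(1)] h[OF that(1)]] xs that(2)
      by simp
    then have "{i \<in> I. R i r (map (h i) (xs @ [y]))} \<subseteq> {i \<in> I. R i (ex L n r) (map (h i) xs)}"
      by auto
    then show "{i \<in> I. R i (ex L n r) (map (h i) xs)} \<in> U"
      using ultrafilter_mono[OF U y] by auto
  qed
qed

section \<open>Realising finitely many requests\<close>

locale filter_realisation = positive_existential_algebra L for L :: "('e, 'z) pe_alg_scheme" +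
  fixes m k :: nat and p :: "'e set" and G :: "nat \<Rightarrow> 'e set" and ar :: "nat \<Rightarrow> nat"
    and \<alpha> :: "nat \<Rightarrow> nat \<Rightarrow> nat"
  assumes k: "1 \<le> k" and p: "prime_filter L m p"
    and G_sort: "\<And>i. i \<in> {1..k} \<Longrightarrow> G i \<subseteq> S L (Suc (ar i))"
    and G_one: "\<And>i. i \<in> {1..k} \<Longrightarrow> one L (Suc (ar i)) \<in> G i"
    and G_meet: "\<And>i x y. i \<in> {1..k} \<Longrightarrow> x \<in> G i \<Longrightarrow> y \<in> G i \<Longrightarrow> meet L (Suc (ar i)) x y \<in> G i"
    and \<alpha>: "\<And>i. i \<in> {1..k} \<Longrightarrow> \<alpha> i \<in> substs (ar i) m"
    and G_ex: "\<And>i r. i \<in> {1..k} \<Longrightarrow> r \<in> G i \<Longrightarrow> sub L (ar i) m (\<alpha> i) (ex L (ar i) r) \<in> p"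
begin

definition \<beta> :: "nat \<Rightarrow> nat \<Rightarrow> nat" where
  "\<beta> i = restrict (\<lambda>j. if j \<le> ar i then \<alpha> i j else m + i) {1..Suc (ar i)}"

definition admissible :: "(nat \<Rightarrow> 'e) \<Rightarrow> 'e \<Rightarrow> bool" where
  "admissible r s \<longleftrightarrow> (\<forall>i\<in>{1..k}. r i \<in> G i) \<and> s \<in> p"

definition generator :: "(nat \<Rightarrow> 'e) \<Rightarrow> 'e \<Rightarrow> 'e" where
  "generator r s = meet L (m + k)
     (bigmeet L (m + k) k (\<lambda>i. sub L (Suc (ar i)) (m + k) (\<beta> i) (r i)))
     (sub L m (m + k) (cyl m) s)"

definition generated_filter :: "'e set" where
  "generated_filter = {y \<in> S L (m + k). \<exists>r s. admissible r s \<and> le L (m + k) (generator r s) y}"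

lemma \<beta>_substs: "i \<in> {1..k} \<Longrightarrow> \<beta> i \<in> substs (Suc (ar i)) (m + k)"
  using substs_apply[OF \<alpha>] unfolding \<beta>_def substs_def by fastforce

lemma cyl_into_sum: "cyl m \<in> substs m (m + k)"
  by (rule cyl_substs) simp

lemma admissible_in_sort:
  assumes "admissible r s"
  shows "\<And>i. i \<in> {1..k} \<Longrightarrow> r i \<in> S L (Suc (ar i))" and "s \<in> S L m"
  using assms G_sort prime_filter_subset[OF p] unfolding admissible_def by blast+

lemma admissible_one: "admissible (\<lambda>i. one L (Suc (ar i))) (one L m)"
  unfolding admissible_def using G_one prime_filter_one[OF p] by blast

lemma admissible_meet:
  "admissible r s \<Longrightarrow> admissible r' s' \<Longrightarrow>
    admissible (\<lambda>i. meet L (Suc (ar i)) (r i) (r' i)) (meet L m s s')"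
  using G_meet prime_filter_meet_iff[OF p] admissible_in_sort unfolding admissible_def by blast

lemma bigmeet_generator_in_sort:
  "admissible r s \<Longrightarrow> bigmeet L (m + k) k (\<lambda>i. sub L (Suc (ar i)) (m + k) (\<beta> i) (r i)) \<in> S L (m + k)"
  by (rule bigmeet_in_sort) (use admissible_in_sort \<beta>_substs in simp)

lemma generator_in_sort: "admissible r s \<Longrightarrow> generator r s \<in> S L (m + k)"
  unfolding generator_def using bigmeet_generator_in_sort admissible_in_sort cyl_into_sum by simp

lemma generator_le_cyl: "admissible r s \<Longrightarrow> le L (m + k) (generator r s) (sub L m (m + k) (cyl m) s)"
  unfolding generator_def using bigmeet_generator_in_sort admissible_in_sort cyl_into_sum by (simp add: le_meet2)

lemma generator_le_component:
  assumes rs: "admissible r s" and i: "i \<in> {1..k}"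
  shows "le L (m + k) (generator r s) (sub L (Suc (ar i)) (m + k) (\<beta> i) (r i))"
proof -
  have comp: "sub L (Suc (ar j)) (m + k) (\<beta> j) (r j) \<in> S L (m + k)" if "j \<in> {1..k}" for j
    using admissible_in_sort(1)[OF rs that] \<beta>_substs[OF that] by simp
  note bm = bigmeet_generator_in_sort[OF rs]
  have "sub L m (m + k) (cyl m) s \<in> S L (m + k)" using admissible_in_sort(2)[OF rs] cyl_into_sum by simp
  then have "le L (m + k) (generator r s) (bigmeet L (m + k) k (\<lambda>i. sub L (Suc (ar i)) (m + k) (\<beta> i) (r i)))"
    unfolding generator_def using le_meet1[OF bm] by blast
  moreover have "le L (m + k) (bigmeet L (m + k) k (\<lambda>i. sub L (Suc (ar i)) (m + k) (\<beta> i) (r i)))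
      (sub L (Suc (ar i)) (m + k) (\<beta> i) (r i))"
    using bigmeet_le[OF comp i] by simp
  ultimately show ?thesis
    using le_trans[OF generator_in_sort[OF rs] bm comp[OF i]] by blast
qed

lemma generator_meet_le:
  assumes rs: "admissible r s" and rs': "admissible r' s'"
  defines "g \<equiv> generator (\<lambda>i. meet L (Suc (ar i)) (r i) (r' i)) (meet L m s s')"
  shows "le L (m + k) g (generator r s)" and "le L (m + k) g (generator r' s')"
proof -
  note r = admissible_in_sort(1)[OF rs] and r' = admissible_in_sort(1)[OF rs']
  note s = admissible_in_sort(2)[OF rs] admissible_in_sort(2)[OF rs']
  note bm = bigmeet_generator_in_sort[OF admissible_meet[OF rs rs']]
    bigmeet_generator_in_sort[OF rs] bigmeet_generator_in_sort[OF rs']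
  have "le L (m + k)
      (bigmeet L (m + k) k (\<lambda>i. sub L (Suc (ar i)) (m + k) (\<beta> i) (meet L (Suc (ar i)) (r i) (r' i))))
      (bigmeet L (m + k) k (\<lambda>i. sub L (Suc (ar i)) (m + k) (\<beta> i) (r i)))"
    using r r' \<beta>_substs by (intro bigmeet_mono sub_mono le_meet1) auto
  moreover have "le L (m + k) (sub L m (m + k) (cyl m) (meet L m s s')) (sub L m (m + k) (cyl m) s)"
    using s cyl_into_sum by (intro sub_mono le_meet1) auto
  ultimately show "le L (m + k) g (generator r s)"
    unfolding g_def generator_def using bm s cyl_into_sum by (intro le_meet_mono) auto
  have "le L (m + k)
      (bigmeet L (m + k) k (\<lambda>i. sub L (Suc (ar i)) (m + k) (\<beta> i) (meet L (Suc (ar i)) (r i) (r' i))))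
      (bigmeet L (m + k) k (\<lambda>i. sub L (Suc (ar i)) (m + k) (\<beta> i) (r' i)))"
    using r r' \<beta>_substs by (intro bigmeet_mono sub_mono le_meet2) auto
  moreover have "le L (m + k) (sub L m (m + k) (cyl m) (meet L m s s')) (sub L m (m + k) (cyl m) s')"
    using s cyl_into_sum by (intro sub_mono le_meet2) auto
  ultimately show "le L (m + k) g (generator r' s')"
    unfolding g_def generator_def using bm s cyl_into_sum by (intro le_meet_mono) auto
qed

text \<open>Axiom (10) projects out all \<open>k\<close> witnesses simultaneously.\<close>

lemma exs_generator:
  assumes rs: "admissible r s"
  shows "exs L m k (generator r s) \<in> p"
proof -
  note r = admissible_in_sort(1)[OF rs]
  have "exs L m k (generator r s)
      = meet L m (exs L m k (bigmeet L (m + k) k (\<lambda>i. sub L (Suc (ar i)) (m + k) (\<beta> i) (r i)))) s"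
    unfolding generator_def
    using exs_meet_cyl[OF k] bigmeet_generator_in_sort[OF rs] admissible_in_sort(2)[OF rs] by simp
  also have "exs L m k (bigmeet L (m + k) k (\<lambda>i. sub L (Suc (ar i)) (m + k) (\<beta> i) (r i)))
      = bigmeet L m k (\<lambda>i. sub L (ar i) m (\<alpha> i) (ex L (ar i) (r i)))"
    unfolding \<beta>_def using ax10 \<alpha> r unfolding ax10_def by blast
  moreover have "bigmeet L m k (\<lambda>i. sub L (ar i) m (\<alpha> i) (ex L (ar i) (r i))) \<in> p"
    by (rule prime_filter_bigmeet[OF p]) (use G_ex rs in \<open>simp add: admissible_def\<close>)
  moreover have "s \<in> p" using rs unfolding admissible_def by simp
  ultimately show ?thesis
    using prime_filter_meet_iff[OF p] prime_filter_subset[OF p] by auto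
qed

lemma generated_filter_exs:
  assumes "y \<in> generated_filter"
  shows "exs L m k y \<in> p"
proof -
  obtain r s where rs: "admissible r s" "le L (m + k) (generator r s) y" "y \<in> S L (m + k)"
    using assms unfolding generated_filter_def by blast
  then have "le L m (exs L m k (generator r s)) (exs L m k y)"
    using exs_mono generator_in_sort by blast
  then show ?thesis
    using prime_filter_up[OF p exs_generator[OF rs(1)]] rs(3) by simp
qed

lemma meet_filter_generated_filter: "meet_filter (S L (m + k)) (meet L (m + k)) generated_filter"
  unfolding meet_filter_def
proof (intro conjI ballI impI)
  show "generated_filter \<subseteq> S L (m + k)" unfolding generated_filter_def by blast
next
  fix x y assume "x \<in> generated_filter" "y \<in> S L (m + k)" "meet L (m + k) x y = x"
  then show "y \<in> generated_filter"
    unfolding generated_filter_def le_iff_meet[symmetric] using le_trans generator_in_sort by blast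
next
  fix x y assume "x \<in> generated_filter" "y \<in> generated_filter"
  then obtain r s r' s' where rs: "admissible r s" "le L (m + k) (generator r s) x" "x \<in> S L (m + k)"
    and rs': "admissible r' s'" "le L (m + k) (generator r' s') y" "y \<in> S L (m + k)"
    unfolding generated_filter_def by blast
  let ?r = "\<lambda>i. meet L (Suc (ar i)) (r i) (r' i)" and ?s = "meet L m s s'"
  have g: "generator ?r ?s \<in> S L (m + k)"
    using generator_in_sort[OF admissible_meet[OF rs(1) rs'(1)]] .
  have "le L (m + k) (generator ?r ?s) x" "le L (m + k) (generator ?r ?s) y"
    using le_trans[OF g generator_in_sort[OF rs(1)] rs(3) generator_meet_le(1)[OF rs(1) rs'(1)] rs(2)]
      le_trans[OF g generator_in_sort[OF rs'(1)] rs'(3) generator_meet_le(2)[OF rs(1) rs'(1)] rs'(2)] .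
  then show "meet L (m + k) x y \<in> generated_filter"
    unfolding generated_filter_def using le_meetI g rs rs' admissible_meet by fastforce
qed

theorem exists_realising_filter:
  "\<exists>Q. prime_filter L (m + k) Q \<and> (\<forall>s\<in>S L m. sub L m (m + k) (cyl m) s \<in> Q \<longleftrightarrow> s \<in> p) \<and>
     (\<forall>i\<in>{1..k}. \<forall>r\<in>G i. sub L (Suc (ar i)) (m + k) (\<beta> i) r \<in> Q)"
proof -
  have "le L (m + k) (generator (\<lambda>i. one L (Suc (ar i))) (one L m)) (one L (m + k))"
    by (rule le_one[OF generator_in_sort[OF admissible_one]])
  then have "one L (m + k) \<in> generated_filter"
    unfolding generated_filter_def using admissible_one one_in_sort by blast
  then have "generated_filter \<noteq> {}" by blast
  moreover have "\<forall>y\<in>generated_filter. exs L m k y \<in> p"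
    using generated_filter_exs by blast
  ultimately obtain Q where pf: "prime_filter L (m + k) Q" and FQ: "generated_filter \<subseteq> Q"
    and Q\<phi>: "\<forall>y\<in>Q. exs L m k y \<in> p"
    using exists_prime_filter_over[OF p meet_filter_generated_filter] by blast
  have "sub L m (m + k) (cyl m) s \<in> Q \<longleftrightarrow> s \<in> p" if s: "s \<in> S L m" for s
  proof
    assume "sub L m (m + k) (cyl m) s \<in> Q"
    then have "exs L m k (sub L m (m + k) (cyl m) s) \<in> p" using Q\<phi> by blast
    moreover have "exs L m k (sub L m (m + k) (cyl m) s) = meet L m (exs L m k (one L (m + k))) s"
      using exs_meet_cyl[OF k, of "one L (m + k)" m s] s meet_one cyl_into_sum by simp
    ultimately show "s \<in> p" using s prime_filter_meet_iff[OF p] by simp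
  next
    assume "s \<in> p"
    then have "admissible (\<lambda>i. one L (Suc (ar i))) s"
      using admissible_one unfolding admissible_def by blast
    then have "sub L m (m + k) (cyl m) s \<in> generated_filter"
      unfolding generated_filter_def using generator_le_cyl s cyl_into_sum by auto
    then show "sub L m (m + k) (cyl m) s \<in> Q" using FQ by blast
  qed
  moreover have "sub L (Suc (ar i)) (m + k) (\<beta> i) r \<in> Q" if i: "i \<in> {1..k}" and r: "r \<in> G i" for i r
  proof -
    let ?r = "\<lambda>j. if j = i then r else one L (Suc (ar j))"
    have rs: "admissible ?r (one L m)"
      using admissible_one r unfolding admissible_def by auto
    then have "le L (m + k) (generator ?r (one L m)) (sub L (Suc (ar i)) (m + k) (\<beta> i) r)"
      using generator_le_component[OF rs i] by simp
    then show ?thesis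
      using FQ rs admissible_in_sort(1)[OF rs i] \<beta>_substs[OF i]
      unfolding generated_filter_def by fastforce
  qed
  ultimately show ?thesis using pf by blast
qed

end

lemma filter_realisationI:
  assumes "positive_existential_algebra L" "1 \<le> k" "prime_filter L m p"
    "\<And>i. i \<in> {1..k} \<Longrightarrow> G i \<subseteq> S L (Suc (ar i))"
    "\<And>i. i \<in> {1..k} \<Longrightarrow> one L (Suc (ar i)) \<in> G i"
    "\<And>i x y. i \<in> {1..k} \<Longrightarrow> x \<in> G i \<Longrightarrow> y \<in> G i \<Longrightarrow> meet L (Suc (ar i)) x y \<in> G i"
    "\<And>i. i \<in> {1..k} \<Longrightarrow> \<alpha> i \<in> substs (ar i) m"
    "\<And>i r. i \<in> {1..k} \<Longrightarrow> r \<in> G i \<Longrightarrow> sub L (ar i) m (\<alpha> i) (ex L (ar i) r) \<in> p"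
  shows "filter_realisation L m k p G ar \<alpha>"
  using assms by (intro filter_realisation.intro filter_realisation_axioms.intro)

section \<open>Configurations and the ultraproduct\<close>

type_synonym ('a, 'b) request = "'a list \<times> 'b set"

type_synonym ('a, 'b) config = "'a list \<times> ('a, 'b) request list"

locale almost_morphic_model = positive_existential_algebra L for L :: "('e, 'z) pe_alg_scheme" +
  fixes D1 :: "'m set" and R1 :: "'e \<Rightarrow> 'm list \<Rightarrow> bool"
  assumes model: "almost_morphic L D1 R1"
begin

lemma ptype_prime_filter:
  assumes as: "as \<in> lists D1"
  shows "prime_filter L (length as) (ptype L R1 as)"
  unfolding prime_filter_def
proof (intro conjI ballI impI)
  let ?n = "length as"
  show "ptype L R1 as \<subseteq> S L ?n" unfolding ptype_def by auto
  have "one L ?n \<in> ptype L R1 as" "zero L ?n \<notin> ptype L R1 as"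
    using almost_morphic_one[OF model as] almost_morphic_zero[OF model as] unfolding ptype_def by auto
  then show "ptype L R1 as \<noteq> {}" "ptype L R1 as \<noteq> S L ?n" using zero_in_sort by auto
next
  fix x y assume x: "x \<in> ptype L R1 as" and y: "y \<in> S L (length as)"
    and xy: "le L (length as) x y"
  have "meet L (length as) x y = x" using xy unfolding le_iff_meet .
  then have "R1 (meet L (length as) x y) as" using x by (simp add: ptype_def)
  then show "y \<in> ptype L R1 as" using almost_morphic_meet[OF model as, of x y] x y by (simp add: ptype_def)
next
  fix x y assume "x \<in> ptype L R1 as" "y \<in> ptype L R1 as"
  then show "meet L (length as) x y \<in> ptype L R1 as"
    using almost_morphic_meet[OF model as, of x y] unfolding ptype_def by simp
next
  fix x y assume "x \<in> S L (length as)" "y \<in> S L (length as)" "join L (length as) x y \<in> ptype L R1 as"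
  then show "x \<in> ptype L R1 as \<or> y \<in> ptype L R1 as"
    using almost_morphic_join[OF model as, of x y] unfolding ptype_def by simp
qed

definition valid_request :: "('m, 'e) request \<Rightarrow> bool" where
  "valid_request w \<longleftrightarrow> prime_filter L (Suc (length (fst w))) (snd w) \<and>
     cyl_inv L (length (fst w)) (snd w) = ptype L R1 (fst w)"

text \<open>Invalid requests are replaced by a trivial one, so that every configuration can be realised.\<close>

definition requested :: "('m, 'e) request \<Rightarrow> 'e set" where
  "requested w = (if valid_request w then snd w else {one L (Suc (length (fst w)))})"

definition configs :: "('m, 'e) config set" where
  "configs = {c. fst c \<in> lists D1 \<and> fst c \<noteq> [] \<and> snd c \<noteq> [] \<and> (\<forall>w\<in>set (snd c). set (fst w) \<subseteq> set (fst c))}"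

text \<open>A configuration is a tuple of \<open>M\<^sub>1\<close> with a list of requests over subtuples of it. Its
  sort has one variable per entry of the tuple followed by one fresh variable per request; elements
  not mentioned by the configuration are sent to the junk position 1.\<close>

definition config_sort :: "('m, 'e) config \<Rightarrow> nat" where
  "config_sort c = length (fst c) + length (snd c)"

definition config_pos :: "('m, 'e) config \<Rightarrow> 'm + ('m, 'e) request \<Rightarrow> nat" where
  "config_pos c x = (case x of
      Inl a \<Rightarrow> position (fst c) a
    | Inr w \<Rightarrow> if w \<in> set (snd c) then length (fst c) + position (snd c) w else 1)"

definition mentions :: "('m, 'e) config \<Rightarrow> 'm + ('m, 'e) request \<Rightarrow> bool" where
  "mentions c x = (case x of Inl a \<Rightarrow> a \<in> set (fst c) | Inr w \<Rightarrow> w \<in> set (snd c))"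

definition realises :: "('m, 'e) config \<Rightarrow> 'e set \<Rightarrow> bool" where
  "realises c Q \<longleftrightarrow> prime_filter L (config_sort c) Q \<and>
    (\<forall>w\<in>set (snd c). \<forall>r\<in>requested w.
       filter_rel L (config_sort c) Q r (map (config_pos c) (map Inl (fst w) @ [Inr w]))) \<and>
    (\<forall>as. set as \<subseteq> set (fst c) \<longrightarrow> (\<forall>r\<in>S L (length as).
       filter_rel L (config_sort c) Q r (map (config_pos c) (map Inl as)) \<longleftrightarrow> R1 r as))"

lemma config_pos_range:
  assumes c: "c \<in> configs"
  shows "config_pos c x \<in> {1..config_sort c}"
proof -
  have ne: "fst c \<noteq> []" "snd c \<noteq> []" using c unfolding configs_def by auto
  show ?thesis
  proof (cases x)
    case (Inl a)
    then show ?thesis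
      using position_range[OF ne(1), of a] unfolding config_pos_def config_sort_def by auto
  next
    case (Inr w)
    then show ?thesis
      using position_range[OF ne(2), of w] ne(1) unfolding config_pos_def config_sort_def by auto
  qed
qed

lemma requested_in_sort: "requested w \<subseteq> S L (Suc (length (fst w)))"
  unfolding requested_def valid_request_def using prime_filter_subset by auto

lemma one_requested: "one L (Suc (length (fst w))) \<in> requested w"
  unfolding requested_def valid_request_def using prime_filter_one by auto

lemma requested_meet:
  assumes "x \<in> requested w" "y \<in> requested w"
  shows "meet L (Suc (length (fst w))) x y \<in> requested w"
proof (cases "valid_request w")
  case True
  then have pf: "prime_filter L (Suc (length (fst w))) (snd w)" unfolding valid_request_def by simp
  have "x \<in> snd w" "y \<in> snd w" using True assms unfolding requested_def by simp_all
  then have "meet L (Suc (length (fst w))) x y \<in> snd w"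
    using prime_filter_meet_iff[OF pf] prime_filter_subset[OF pf] by blast
  then show ?thesis using True unfolding requested_def by simp
next
  case False
  then show ?thesis using assms meet_idem unfolding requested_def by simp
qed

lemma ex_requested:
  assumes w: "fst w \<in> lists D1" and r: "r \<in> requested w"
  shows "R1 (ex L (length (fst w)) r) (fst w)"
proof (cases "valid_request w")
  case True
  let ?n = "length (fst w)"
  have pf: "prime_filter L (Suc ?n) (snd w)" and type: "cyl_inv L ?n (snd w) = ptype L R1 (fst w)"
    using True unfolding valid_request_def by simp_all
  have rG: "r \<in> snd w" using True r unfolding requested_def by simp
  then have rS: "r \<in> S L (Suc ?n)" using prime_filter_subset[OF pf] by blast
  have "sub L ?n (Suc ?n) (cyl ?n) (ex L ?n r) \<in> S L (Suc ?n)"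
    using rS cyl_substs[of ?n "Suc ?n"] by simp
  then have "sub L ?n (Suc ?n) (cyl ?n) (ex L ?n r) \<in> snd w"
    using prime_filter_up[OF pf rG _ le_cyl_ex[OF rS]] by blast
  then have "ex L ?n r \<in> cyl_inv L ?n (snd w)"
    using rS unfolding cyl_inv_def by simp
  then show ?thesis unfolding type ptype_def by simp
next
  case False
  obtain y where y: "y \<in> D1" using almost_morphic_nonempty[OF model] by blast
  have "R1 (one L (Suc (length (fst w)))) (fst w @ [y])"
    using almost_morphic_one[OF model, of "fst w @ [y]"] w y by simp
  then show ?thesis
    using False r almost_morphic_ex[OF model _ w y] unfolding requested_def by simp
qed

lemma ex_requested_in_type:
  assumes as: "as \<in> lists D1" "as \<noteq> []" and w: "set (fst w) \<subseteq> set as" and r: "r \<in> requested w"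
  shows "sub L (length (fst w)) (length as) (subst_of (map (position as) (fst w)))
    (ex L (length (fst w)) r) \<in> ptype L R1 as"
proof -
  let ?\<alpha> = "subst_of (map (position as) (fst w))"
  have \<alpha>: "?\<alpha> \<in> substs (length (fst w)) (length as)"
    using subst_of_positions[OF as(2)] .
  have exS: "ex L (length (fst w)) r \<in> S L (length (fst w))"
    using requested_in_sort[of w] r by auto
  have "fst w \<in> lists D1" using w as(1) by auto
  then have "R1 (ex L (length (fst w)) r) (tup (length (fst w)) ?\<alpha> as)"
    using ex_requested r tup_subst_of_positions[OF w] by simp
  then show ?thesis
    unfolding ptype_def using almost_morphic_sub[OF model \<alpha> exS as(1)] \<alpha> exS by simp
qed

lemma filter_rel_positions_iff:
  assumes as: "as \<in> lists D1" "as \<noteq> []"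
    and type: "\<forall>s\<in>S L (length as).
      sub L (length as) (length as + k) (cyl (length as)) s \<in> Q \<longleftrightarrow> s \<in> ptype L R1 as"
    and bs: "set bs \<subseteq> set as" and r: "r \<in> S L (length bs)"
  shows "filter_rel L (length as + k) Q r (map (position as) bs) \<longleftrightarrow> R1 r bs"
proof -
  let ?m = "length as" and ?p = "subst_of (map (position as) bs)"
  have p: "?p \<in> substs (length bs) ?m"
    using subst_of_positions[OF as(2)] .
  have cyl_m: "cyl ?m \<in> substs ?m (?m + k)" by (rule cyl_substs) simp
  have sub_p: "sub L (length bs) ?m ?p r \<in> S L ?m" using p r by simp
  have "restrict (cyl ?m \<circ> ?p) {1..length bs} = ?p"
    using cyl_comp_subst_of[OF positions_range[OF as(2)]] by simp
  then have "sub L (length bs) (?m + k) ?p r = sub L ?m (?m + k) (cyl ?m) (sub L (length bs) ?m ?p r)"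
    using sub_comp[OF p cyl_m r] by simp
  then have "sub L (length bs) (?m + k) ?p r \<in> Q \<longleftrightarrow> sub L (length bs) ?m ?p r \<in> ptype L R1 as"
    using type sub_p by simp
  also have "\<dots> \<longleftrightarrow> R1 r (tup (length bs) ?p as)"
    using almost_morphic_sub[OF model p r as(1)] sub_p unfolding ptype_def by simp
  also have "tup (length bs) ?p as = bs"
    using tup_subst_of_positions[OF bs] .
  finally show ?thesis unfolding filter_rel_def by simp
qed

lemma realising_filter_exists:
  assumes c: "c \<in> configs"
  shows "\<exists>Q. realises c Q"
proof -
  obtain as ws where c_eq: "c = (as, ws)" by (cases c)
  have as: "as \<in> lists D1" "as \<noteq> []" and ws: "ws \<noteq> []"
    and ws_as: "\<And>w. w \<in> set ws \<Longrightarrow> set (fst w) \<subseteq> set as"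
    using c unfolding configs_def c_eq by auto
  let ?m = "length as" and ?k = "length ws"
  define w where "w t = ws ! (t - 1)" for t
  define \<alpha> where "\<alpha> t = subst_of (map (position as) (fst (w t)))" for t
  have w: "w t \<in> set ws" if "t \<in> {1..?k}" for t
    using that unfolding w_def by auto
  have \<alpha>_substs: "\<alpha> t \<in> substs (length (fst (w t))) ?m" for t
    unfolding \<alpha>_def using subst_of_positions[OF as(2)] .
  interpret R: filter_realisation L ?m ?k "ptype L R1 as" "\<lambda>t. requested (w t)"
      "\<lambda>t. length (fst (w t))" \<alpha>
    by (rule filter_realisationI)
      (use positive_existential_algebra_axioms ws ptype_prime_filter[OF as(1)] requested_in_sort
        one_requested requested_meet \<alpha>_substs ex_requested_in_type[OF as ws_as[OF w]]
        in \<open>auto simp: Suc_le_eq \<alpha>_def\<close>)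
  obtain Q where Q: "prime_filter L (?m + ?k) Q"
      "\<forall>s\<in>S L ?m. sub L ?m (?m + ?k) (cyl ?m) s \<in> Q \<longleftrightarrow> s \<in> ptype L R1 as"
    and G: "\<forall>t\<in>{1..?k}. \<forall>r\<in>requested (w t). sub L (Suc (length (fst (w t)))) (?m + ?k) (R.\<beta> t) r \<in> Q"
    using R.exists_realising_filter by blast
  have "realises c Q"
    unfolding realises_def
  proof (intro conjI ballI allI impI)
    show "prime_filter L (config_sort c) Q" using Q(1) unfolding config_sort_def c_eq by simp
  next
    fix v r assume v: "v \<in> set (snd c)" and r: "r \<in> requested v"
    define t where "t = position ws v"
    have t: "t \<in> {1..?k}" "w t = v"
      using v first_index[of v ws] position_range[OF ws] unfolding t_def w_def position_def c_eq by auto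
    have eq: "map (config_pos c) (map Inl (fst v) @ [Inr v]) = map (position as) (fst v) @ [?m + t]"
      using v unfolding config_pos_def t_def c_eq by simp
    have "R.\<beta> t = subst_of (map (position as) (fst v) @ [?m + t])"
      unfolding R.\<beta>_def \<alpha>_def subst_of_snoc t(2) by simp
    moreover have "sub L (Suc (length (fst v))) (?m + ?k) (R.\<beta> t) r \<in> Q"
      using G t r by blast
    ultimately have "filter_rel L (config_sort c) Q r (map (position as) (fst v) @ [?m + t])"
      unfolding filter_rel_def config_sort_def c_eq by simp
    then show "filter_rel L (config_sort c) Q r (map (config_pos c) (map Inl (fst v) @ [Inr v]))"
      unfolding eq .
  next
    fix bs r assume bs: "set bs \<subseteq> set (fst c)" and r: "r \<in> S L (length bs)"
    have "map (config_pos c) (map Inl bs) = map (position as) bs"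
      unfolding config_pos_def c_eq by simp
    moreover have "filter_rel L (config_sort c) Q r (map (position as) bs) \<longleftrightarrow> R1 r bs"
      using filter_rel_positions_iff[OF as Q(2)] bs r unfolding config_sort_def c_eq by simp
    ultimately show "filter_rel L (config_sort c) Q r (map (config_pos c) (map Inl bs)) \<longleftrightarrow> R1 r bs"
      by (simp only:)
  qed
  then show ?thesis by blast
qed

end

context almost_morphic_model
begin

lemma configs_fip:
  assumes K': "finite K'" "K' \<subseteq> D1 <+> lists D1 \<times> UNIV"
  shows "\<exists>c\<in>configs. \<forall>x\<in>K'. mentions c x"
proof -
  obtain a0 where a0: "a0 \<in> D1" using almost_morphic_nonempty[OF model] by blast
  obtain xs where xs: "set xs = K'" using finite_list[OF K'(1)] by blast
  define elems where "elems x = (case x of Inl a \<Rightarrow> [a] | Inr w \<Rightarrow> fst w)" for x :: "'m + ('m, 'e) request"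
  define reqs where "reqs x = (case x of Inl a \<Rightarrow> [] | Inr w \<Rightarrow> [w])" for x :: "'m + ('m, 'e) request"
  define c where "c = (a0 # concat (map elems xs), ([], {}) # concat (map reqs xs))"
  have "set (elems x) \<subseteq> D1" if "x \<in> set xs" for x
    using that xs K'(2) unfolding elems_def by (cases x) auto
  then have "set (concat (map elems xs)) \<subseteq> D1" by (simp add: UN_subset_iff)
  then have "fst c \<in> lists D1" using a0 unfolding c_def by (simp add: lists_eq_set)
  moreover have "set (fst w) \<subseteq> set (fst c)" if "w \<in> set (snd c)" for w
    using that unfolding c_def reqs_def elems_def by (auto split: sum.splits)
  ultimately have "c \<in> configs" unfolding configs_def c_def by auto
  moreover have "mentions c x" if "x \<in> K'" for x
    using that xs unfolding mentions_def c_def elems_def reqs_def by (cases x) force+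
  ultimately show ?thesis by blast
qed

definition config_filter :: "('m, 'e) config \<Rightarrow> 'e set" where
  "config_filter c = (SOME Q. realises c Q)"

lemma realises_config_filter: "c \<in> configs \<Longrightarrow> realises c (config_filter c)"
  unfolding config_filter_def using realising_filter_exists by (rule someI_ex)

definition ultraproduct_rel ::
    "('m, 'e) config set set \<Rightarrow> 'e \<Rightarrow> ('m + ('m, 'e) request) list \<Rightarrow> bool" where
  "ultraproduct_rel U r xs \<longleftrightarrow>
     {c \<in> configs. filter_rel L (config_sort c) (config_filter c) r (map (config_pos c) xs)} \<in> U"

lemma almost_morphic_ultraproduct_rel:
  assumes U: "ultrafilter_on configs U"
  shows "almost_morphic L UNIV (ultraproduct_rel U)"
proof -
  have M: "almost_morphic L {1..config_sort c} (filter_rel L (config_sort c) (config_filter c))"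
    if "c \<in> configs" for c
    using almost_morphic_filter_rel realises_config_filter[OF that] config_pos_range[OF that]
    unfolding realises_def by fastforce
  have "almost_morphic L UNIV (\<lambda>r xs.
      {c \<in> configs. filter_rel L (config_sort c) (config_filter c) r (map (config_pos c) xs)} \<in> U)"
    using almost_morphic_ultraproduct[OF U M config_pos_range] .
  then show ?thesis unfolding ultraproduct_rel_def[abs_def] .
qed

lemma configs_containing_list:
  assumes U: "ultrafilter_on configs U"
    and elems: "\<And>a. a \<in> D1 \<Longrightarrow> {c \<in> configs. mentions c (Inl a)} \<in> U"
  shows "as \<in> lists D1 \<Longrightarrow> {c \<in> configs. set as \<subseteq> set (fst c)} \<in> U"
proof (induction as)
  case Nil
  then show ?case using ultrafilter_top[OF U] by simp
next
  case (Cons a as)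
  have "{c \<in> configs. set (a # as) \<subseteq> set (fst c)} =
      {c \<in> configs. mentions c (Inl a)} \<inter> {c \<in> configs. set as \<subseteq> set (fst c)}"
    unfolding mentions_def by auto
  then show ?case using Cons elems ultrafilter_Int[OF U] by simp
qed

lemma substructure_ultraproduct_rel:
  assumes U: "ultrafilter_on configs U"
    and elems: "\<And>a. a \<in> D1 \<Longrightarrow> {c \<in> configs. mentions c (Inl a)} \<in> U"
  shows "substructure L Inl D1 R1 UNIV (ultraproduct_rel U)"
  unfolding substructure_def
proof (intro conjI allI ballI impI)
  fix n r as assume r: "r \<in> S L n" and as: "as \<in> lists D1" and n: "length as = n"
  let ?Y = "{c \<in> configs. set as \<subseteq> set (fst c)}"
  let ?Z = "{c \<in> configs. filter_rel L (config_sort c) (config_filter c) r (map (config_pos c) (map Inl as))}"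
  have Y: "?Y \<in> U" using configs_containing_list[OF U elems as] .
  have agree: "c \<in> ?Z \<longleftrightarrow> R1 r as" if "c \<in> ?Y" for c
    using that realises_config_filter[of c] r n unfolding realises_def by auto
  show "ultraproduct_rel U r (map Inl as) \<longleftrightarrow> R1 r as"
  proof
    assume "ultraproduct_rel U r (map Inl as)"
    then have "?Z \<inter> ?Y \<in> U" using Y ultrafilter_Int[OF U] unfolding ultraproduct_rel_def by blast
    then have "?Z \<inter> ?Y \<noteq> {}" using ultrafilter_empty[OF U] by auto
    then show "R1 r as" using agree by blast
  next
    assume "R1 r as"
    then have "?Y \<subseteq> ?Z" using agree by blast
    then show "ultraproduct_rel U r (map Inl as)"
      using ultrafilter_mono[OF U Y] unfolding ultraproduct_rel_def by blast
  qed
qed auto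

lemma has_witnesses_ultraproduct_rel:
  assumes U: "ultrafilter_on configs U"
    and requests: "\<And>w. w \<in> lists D1 \<times> UNIV \<Longrightarrow> {c \<in> configs. mentions c (Inr w)} \<in> U"
  shows "has_witnesses L Inl D1 R1 UNIV (ultraproduct_rel U)"
  unfolding has_witnesses_def
proof (intro ballI allI impI)
  fix as G assume as: "as \<in> lists D1" and G: "prime_filter L (Suc (length as)) G"
    and type: "cyl_inv L (length as) G = ptype L R1 as"
  let ?w = "(as, G)"
  have req: "requested ?w = G" using G type unfolding requested_def valid_request_def by simp
  let ?Y = "{c \<in> configs. mentions c (Inr ?w)}"
  have "ultraproduct_rel U r (map Inl as @ [Inr ?w])" if r: "r \<in> G" for r
  proof -
    have "filter_rel L (config_sort c) (config_filter c) r (map (config_pos c) (map Inl as @ [Inr ?w]))"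
      if "c \<in> ?Y" for c
    proof -
      have "realises c (config_filter c)" "?w \<in> set (snd c)"
        using that realises_config_filter unfolding mentions_def by auto
      moreover have "r \<in> requested ?w" using r req by simp
      ultimately have "filter_rel L (config_sort c) (config_filter c) r
          (map (config_pos c) (map Inl (fst ?w) @ [Inr ?w]))"
        unfolding realises_def by blast
      then show ?thesis by simp
    qed
    then have sub: "?Y \<subseteq> {c \<in> configs.
        filter_rel L (config_sort c) (config_filter c) r (map (config_pos c) (map Inl as @ [Inr ?w]))}"
      by blast
    have Y: "?Y \<in> U" using requests as by simp
    show ?thesis
      unfolding ultraproduct_rel_def by (rule ultrafilter_mono[OF U Y sub]) auto
  qed
  then show "\<exists>b\<in>UNIV. \<forall>r\<in>G. ultraproduct_rel U r (map Inl as @ [b])" by blast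
qed

theorem extension_with_witnesses:
  "\<exists>(D2 :: ('m + ('m, 'e) request) set) R2.
     almost_morphic L D2 R2 \<and> substructure L Inl D1 R1 D2 R2 \<and> has_witnesses L Inl D1 R1 D2 R2"
proof -
  obtain U where U: "ultrafilter_on configs U"
    and "\<forall>x\<in>D1 <+> lists D1 \<times> UNIV. {c \<in> configs. mentions c x} \<in> U"
    using ultrafilter_extending[of "D1 <+> lists D1 \<times> UNIV" configs "\<lambda>x c. mentions c x"] configs_fip
    by blast
  then show ?thesis
    using almost_morphic_ultraproduct_rel substructure_ultraproduct_rel has_witnesses_ultraproduct_rel by blast
qed

end

theorem lemma4p13:
  fixes L :: "'e pe_alg" and D1 :: "'m set" and R1 :: "'e \<Rightarrow> 'm list \<Rightarrow> bool"
  assumes "pe_algebra L" "ax1 L" "ax2 L" "ax3 L" "ax7 L" "ax8 L" "ax9 L" "ax10 L"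
    and "almost_morphic L D1 R1"
  shows "\<exists>(D2 :: ('m + 'm list \<times> 'e set) set) R2.
           almost_morphic L D2 R2 \<and> substructure L Inl D1 R1 D2 R2 \<and>
           has_witnesses L Inl D1 R1 D2 R2"
proof -
  interpret almost_morphic_model L D1 R1
    using assms by unfold_locales
  show ?thesis by (rule extension_with_witnesses)
qed

end
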